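(* Let $\Bbbk$ be an algebraically closed field of characteristic $0$, let $P=\Bbbk[x_1,\dots,x_n]$ be a quadratic Poisson algebra with Poisson enveloping algebra $(U(P),\alpha,\beta)$, and let $\phi$ be a graded Poisson automorphism of $P$. Then there exists a unique graded automorphism $\widetilde\phi$ of $U(P)$ such that $\alpha\circ\phi=\widetilde\phi\circ\alpha$ and $\beta\circ\phi=\widetilde\phi\circ\beta$; it is given by $\widetilde\phi(x_i)=\phi(x_i)$ and $\widetilde\phi(y_i)=\sum_{j=1}^n\frac{\partial\phi(x_i)}{\partial x_j}y_j$.
   Context: $P$ has the standard grading and is quadratic: $\{P_1,P_1\}\subseteq P_2$. $U(P)$ is the $\Bbbk$-algebra generated by $x_1,\dots,x_n,y_1,\dots,y_n$ (all of degree $1$) subject to $[x_i,x_j]=0$, $[y_i,y_j]=\sum_k\frac{\partial\{x_i,x_j\}}{\partial x_k}y_k$, $[y_i,x_j]=\{x_i,x_j\}$; the maps $\alpha,\beta:P\to U(P)$ are $\alpha(f)=f$ and $\beta(f)=\sum_{k=1}^n\frac{\partial f}{\partial x_k}y_k$. A graded Poisson automorphism of $P$ is a degree-preserving bijective map that is an algebra and Lie algebra homomorphism. *)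

theory Defs
  imports "HOL-Library.Poly_Mapping" "HOL-Algebra.QuotRing"
    "HOL-Computational_Algebra.Polynomial"
begin

text \<open>Variables are indexed by a finite linearly ordered type 'v (so n = CARD('v)).
  A polynomial is a finitely supported map from monomials (exponent vectors) to coefficients.\<close>

type_synonym ('v, 'k) mpoly = "('v \<Rightarrow>\<^sub>0 nat) \<Rightarrow>\<^sub>0 'k"

definition alg_closed_field :: "'k::field itself \<Rightarrow> bool" where
  "alg_closed_field _ \<longleftrightarrow> (\<forall>p :: 'k poly. degree p \<ge> 1 \<longrightarrow> (\<exists>x. poly p x = 0))"

definition mconst :: "'k::zero \<Rightarrow> ('v, 'k) mpoly" where
  "mconst c = Poly_Mapping.single 0 c"

definition mvar :: "'v \<Rightarrow> ('v, 'k::{zero,one}) mpoly" where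
  "mvar i = Poly_Mapping.single (Poly_Mapping.single i 1) 1"

definition mon_deg :: "('v::finite \<Rightarrow>\<^sub>0 nat) \<Rightarrow> nat" where
  "mon_deg m = (\<Sum>v\<in>UNIV. Poly_Mapping.lookup m v)"

definition mhomog :: "nat \<Rightarrow> ('v::finite, 'k::zero) mpoly set" where
  "mhomog d = {f. \<forall>m\<in>Poly_Mapping.keys f. mon_deg m = d}"

definition mpderiv :: "'v \<Rightarrow> ('v, 'k::comm_semiring_1) mpoly \<Rightarrow> ('v, 'k) mpoly" where
  "mpderiv i f = Abs_poly_mapping
     (\<lambda>m. of_nat (Poly_Mapping.lookup m i + 1) * Poly_Mapping.lookup f (m + Poly_Mapping.single i 1))"

definition poisson_bracket ::
  "(('v, 'k::field) mpoly \<Rightarrow> ('v, 'k) mpoly \<Rightarrow> ('v, 'k) mpoly) \<Rightarrow> bool" where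
  "poisson_bracket br \<longleftrightarrow>
     (\<forall>a b c. br (a + b) c = br a c + br b c) \<and>
     (\<forall>a b c. br (mconst c * a) b = mconst c * br a b) \<and>
     (\<forall>a b. br a b = - br b a) \<and>
     (\<forall>a b c. br a (br b c) + br b (br c a) + br c (br a b) = 0) \<and>
     (\<forall>a b c. br a (b * c) = br a b * c + b * br a c)"

definition quadratic_poisson ::
  "(('v::finite, 'k::field) mpoly \<Rightarrow> ('v, 'k) mpoly \<Rightarrow> ('v, 'k) mpoly) \<Rightarrow> bool" where
  "quadratic_poisson br \<longleftrightarrow> poisson_bracket br \<and>
     (\<forall>a\<in>mhomog 1. \<forall>b\<in>mhomog 1. br a b \<in> mhomog 2)"

definition graded_poisson_aut ::
  "(('v::finite, 'k::field) mpoly \<Rightarrow> ('v, 'k) mpoly \<Rightarrow> ('v, 'k) mpoly)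
   \<Rightarrow> (('v, 'k) mpoly \<Rightarrow> ('v, 'k) mpoly) \<Rightarrow> bool" where
  "graded_poisson_aut br \<phi> \<longleftrightarrow> bij \<phi> \<and>
     (\<forall>a b. \<phi> (a + b) = \<phi> a + \<phi> b) \<and>
     (\<forall>a b. \<phi> (a * b) = \<phi> a * \<phi> b) \<and>
     \<phi> 1 = 1 \<and>
     (\<forall>c a. \<phi> (mconst c * a) = mconst c * \<phi> a) \<and>
     (\<forall>a b. \<phi> (br a b) = br (\<phi> a) (\<phi> b)) \<and>
     (\<forall>d. \<phi> ` mhomog d \<subseteq> mhomog d)"

text \<open>Generators: Inl v is x_v, Inr v is y_v. Elements are finitely supported maps from
  words to coefficients; multiplication is concatenation of words.\<close>
type_synonym ('v, 'k) fa = "('v + 'v) list \<Rightarrow>\<^sub>0 'k"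

definition fa_mult :: "('v, 'k::semiring_0) fa \<Rightarrow> ('v, 'k) fa \<Rightarrow> ('v, 'k) fa" where
  "fa_mult f g = Abs_poly_mapping
     (\<lambda>w. \<Sum>i\<le>length w. Poly_Mapping.lookup f (take i w) * Poly_Mapping.lookup g (drop i w))"

definition FA :: "('v + 'v) list itself \<Rightarrow> 'k::field itself \<Rightarrow> (('v, 'k) fa) ring" where
  "FA _ _ = \<lparr>carrier = UNIV, monoid.mult = fa_mult,
            one = Poly_Mapping.single [] 1, zero = 0, add = (+)\<rparr>"

abbreviation FAlg :: "(('v, 'k::field) fa) ring" where
  "FAlg \<equiv> FA TYPE(('v + 'v) list) TYPE('k)"

definition fa_gen :: "'v + 'v \<Rightarrow> ('v, 'k::{zero,one}) fa" where
  "fa_gen g = Poly_Mapping.single [g] 1"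

definition fa_comm :: "('v, 'k::field) fa \<Rightarrow> ('v, 'k) fa \<Rightarrow> ('v, 'k) fa" where
  "fa_comm a b = fa_mult a b - fa_mult b a"

text \<open>Lift of a commutative polynomial into the x-part of the free algebra
  (monomials written in the increasing order of variables).\<close>
definition xword :: "('v::{finite,linorder} \<Rightarrow>\<^sub>0 nat) \<Rightarrow> ('v + 'v) list" where
  "xword m = concat (map (\<lambda>v. replicate (Poly_Mapping.lookup m v) (Inl v)) (sorted_list_of_set UNIV))"

definition fa_lift :: "('v::{finite,linorder}, 'k::field) mpoly \<Rightarrow> ('v, 'k) fa" where
  "fa_lift f = (\<Sum>m\<in>Poly_Mapping.keys f. Poly_Mapping.single (xword m) (Poly_Mapping.lookup f m))"

definition UP_rels ::
  "(('v::{finite,linorder}, 'k::field) mpoly \<Rightarrow> ('v, 'k) mpoly \<Rightarrow> ('v, 'k) mpoly)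
   \<Rightarrow> ('v, 'k) fa set" where
  "UP_rels br =
     (\<Union>i. \<Union>j.
       { fa_comm (fa_gen (Inl i)) (fa_gen (Inl j)),
         fa_comm (fa_gen (Inr i)) (fa_gen (Inr j))
           - (\<Sum>k\<in>UNIV. fa_mult (fa_lift (mpderiv k (br (mvar i) (mvar j)))) (fa_gen (Inr k))),
         fa_comm (fa_gen (Inr i)) (fa_gen (Inl j)) - fa_lift (br (mvar i) (mvar j)) })"

definition UP_ideal :: "(('v::{finite,linorder}, 'k::field) mpoly \<Rightarrow> ('v, 'k) mpoly \<Rightarrow> ('v, 'k) mpoly)
   \<Rightarrow> ('v, 'k) fa set" where
  "UP_ideal br = genideal FAlg (UP_rels br)"

definition UP :: "(('v::{finite,linorder}, 'k::field) mpoly \<Rightarrow> ('v, 'k) mpoly \<Rightarrow> ('v, 'k) mpoly)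
   \<Rightarrow> (('v, 'k) fa set) ring" where
  "UP br = FAlg Quot UP_ideal br"

definition up_class :: "(('v::{finite,linorder}, 'k::field) mpoly \<Rightarrow> ('v, 'k) mpoly \<Rightarrow> ('v, 'k) mpoly)
   \<Rightarrow> ('v, 'k) fa \<Rightarrow> ('v, 'k) fa set" where
  "up_class br a = UP_ideal br +>\<^bsub>FAlg\<^esub> a"

definition up_scalar where "up_scalar br c = up_class br (Poly_Mapping.single [] c)"

definition up_y where "up_y br i = up_class br (fa_gen (Inr i))"

definition up_homog :: "(('v::{finite,linorder}, 'k::field) mpoly \<Rightarrow> ('v, 'k) mpoly \<Rightarrow> ('v, 'k) mpoly)
   \<Rightarrow> nat \<Rightarrow> ('v, 'k) fa set set" where
  "up_homog br d = {up_class br f | f. \<forall>w\<in>Poly_Mapping.keys f. length w = d}"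

definition up_alpha :: "(('v::{finite,linorder}, 'k::field) mpoly \<Rightarrow> ('v, 'k) mpoly \<Rightarrow> ('v, 'k) mpoly)
   \<Rightarrow> ('v, 'k) mpoly \<Rightarrow> ('v, 'k) fa set" where
  "up_alpha br f = up_class br (fa_lift f)"

definition up_beta :: "(('v::{finite,linorder}, 'k::field) mpoly \<Rightarrow> ('v, 'k) mpoly \<Rightarrow> ('v, 'k) mpoly)
   \<Rightarrow> ('v, 'k) mpoly \<Rightarrow> ('v, 'k) fa set" where
  "up_beta br f = (\<Oplus>\<^bsub>UP br\<^esub> k\<in>UNIV. up_alpha br (mpderiv k f) \<otimes>\<^bsub>UP br\<^esub> up_y br k)"

definition up_graded_aut ::
  "(('v::{finite,linorder}, 'k::field) mpoly \<Rightarrow> ('v, 'k) mpoly \<Rightarrow> ('v, 'k) mpoly)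
   \<Rightarrow> (('v, 'k) fa set \<Rightarrow> ('v, 'k) fa set) \<Rightarrow> bool" where
  "up_graded_aut br \<psi> \<longleftrightarrow> \<psi> \<in> ring_iso (UP br) (UP br) \<and>
     (\<forall>c. \<forall>X\<in>carrier (UP br).
        \<psi> (up_scalar br c \<otimes>\<^bsub>UP br\<^esub> X) = up_scalar br c \<otimes>\<^bsub>UP br\<^esub> \<psi> X) \<and>
     (\<forall>d. \<psi> ` up_homog br d \<subseteq> up_homog br d)"

end

theory Submission
  imports Defs
begin

text \<open>
  The free algebra on the x_i and y_i maps to U(P) by sending x_i to alpha(phi x_i) and y_i
  to beta(phi x_i). In U(P) the maps alpha and beta satisfy the defining relations not only on
  the variables but on all polynomials: [alpha f, alpha g] = 0, [beta f, alpha g] = alpha {f, g}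
  and [beta f, beta g] = beta {f, g}, by induction on f and g using the Leibniz rules for the
  bracket and for partial derivatives. Since phi preserves the bracket, the map therefore kills
  the defining relations and descends to an algebra endomorphism of U(P). It commutes with alpha
  because alpha is multiplicative, and with beta by the chain rule
  beta (phi f) = sum_k alpha (phi (d f / d x_k)) beta (phi x_k). The same construction for the
  inverse of phi gives the inverse map; it is graded because phi maps the variables to linear
  forms, and it is unique because U(P) is generated by the alpha x_i and beta x_i = y_i.
\<close>

section \<open>The free algebra as a monoid algebra\<close>

text \<open>
  With concatenation as addition, lists form a monoid, so that finitely supported maps from
  words to coefficients become the monoid algebra of the free monoid, i.e. the free algebra;
  its product is fa_mult.
\<close>

instantiation list :: (type) monoid_add
begin
definition zero_list_def: "(0::'a list) = []"
definition plus_list_def: "(xs::'a list) + ys = xs @ ys"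
instance by standard (auto simp: zero_list_def plus_list_def)
end

lemma poly_mapping_sum_single:
  fixes f :: "'a \<Rightarrow>\<^sub>0 'b::comm_monoid_add"
  shows "f = (\<Sum>k\<in>Poly_Mapping.keys f. Poly_Mapping.single k (Poly_Mapping.lookup f k))"
proof (rule poly_mapping_eqI)
  fix j
  have "finite I \<Longrightarrow> Poly_Mapping.lookup (\<Sum>k\<in>I. Poly_Mapping.single k (Poly_Mapping.lookup f k)) j
        = (if j \<in> I then Poly_Mapping.lookup f j else 0)" for I
    by (induction I rule: finite_induct) (auto simp: lookup_single lookup_add when_def)
  then show "Poly_Mapping.lookup f j =
      Poly_Mapping.lookup (\<Sum>k\<in>Poly_Mapping.keys f. Poly_Mapping.single k (Poly_Mapping.lookup f k)) j"
    by (auto simp: in_keys_iff)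
qed

lemma poly_mapping_induct [case_names zero single add]:
  fixes f :: "'a \<Rightarrow>\<^sub>0 'b::comm_monoid_add"
  assumes "P 0" and "\<And>k v. P (Poly_Mapping.single k v)" and "\<And>f g. P f \<Longrightarrow> P g \<Longrightarrow> P (f + g)"
  shows "P f"
proof -
  have "finite I \<Longrightarrow> P (\<Sum>k\<in>I. Poly_Mapping.single k (Poly_Mapping.lookup f k))" for I
    by (induction I rule: finite_induct) (auto intro: assms)
  then show ?thesis by (subst poly_mapping_sum_single) simp
qed

lemma single_Nil_one: "Poly_Mapping.single [] 1 = (1 :: 'a list \<Rightarrow>\<^sub>0 'k::semiring_1)"
  by (simp add: zero_list_def[symmetric])

lemma single_mult_single_list:
  "Poly_Mapping.single u a * Poly_Mapping.single v b =
     Poly_Mapping.single (u @ v) (a * b :: 'k::semiring_0)"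
  by (simp add: mult_single plus_list_def)

lemma single_Nil_mult_commute:
  "Poly_Mapping.single [] c * x = x * (Poly_Mapping.single [] c :: 'a list \<Rightarrow>\<^sub>0 'k::comm_semiring_0)"
proof (induction x rule: poly_mapping_induct)
  case (single k v) then show ?case by (simp add: single_mult_single_list mult.commute)
qed (simp_all add: algebra_simps)

lemma lookup_fa_mult:
  "Poly_Mapping.lookup (fa_mult f g) w =
     (\<Sum>i\<le>length w. Poly_Mapping.lookup f (take i w) * Poly_Mapping.lookup g (drop i w))"
proof -
  let ?c = "\<lambda>w. \<Sum>i\<le>length w. Poly_Mapping.lookup f (take i w) * Poly_Mapping.lookup g (drop i w)"
  have "{w. ?c w \<noteq> 0} \<subseteq> (\<lambda>(u, v). u @ v) ` (Poly_Mapping.keys f \<times> Poly_Mapping.keys g)"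
  proof
    fix w assume "w \<in> {w. ?c w \<noteq> 0}"
    then obtain i where "Poly_Mapping.lookup f (take i w) * Poly_Mapping.lookup g (drop i w) \<noteq> 0"
      by (auto elim: sum.not_neutral_contains_not_neutral)
    then have "take i w \<in> Poly_Mapping.keys f" "drop i w \<in> Poly_Mapping.keys g"
      by (auto simp: in_keys_iff)
    then show "w \<in> (\<lambda>(u, v). u @ v) ` (Poly_Mapping.keys f \<times> Poly_Mapping.keys g)"
      by (metis (no_types, lifting) append_take_drop_id case_prod_conv image_eqI mem_Sigma_iff)
  qed
  then have "finite {w. ?c w \<noteq> 0}" by (rule finite_subset) auto
  then show ?thesis unfolding fa_mult_def by (simp add: Abs_poly_mapping_inverse)
qed

lemma fa_mult_single:
  "fa_mult (Poly_Mapping.single u a) (Poly_Mapping.single v b) = Poly_Mapping.single (u @ v) (a * b)"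
proof (rule poly_mapping_eqI)
  fix w
  have "Poly_Mapping.lookup (Poly_Mapping.single u a) (take i w) *
      Poly_Mapping.lookup (Poly_Mapping.single v b) (drop i w)
      = (if i = length u \<and> w = u @ v then a * b else 0)" if "i \<le> length w" for i
  proof (cases "take i w = u \<and> drop i w = v")
    case True
    then have "w = u @ v" by (metis append_take_drop_id)
    moreover have "i = length u" using True that by auto
    ultimately show ?thesis using True by simp
  next
    case False
    then show ?thesis by (auto simp: lookup_single when_def)
  qed
  then have "Poly_Mapping.lookup (fa_mult (Poly_Mapping.single u a) (Poly_Mapping.single v b)) w
      = (\<Sum>i\<le>length w. if i = length u \<and> w = u @ v then a * b else 0)"
    unfolding lookup_fa_mult by (intro sum.cong) auto
  then show "Poly_Mapping.lookup (fa_mult (Poly_Mapping.single u a) (Poly_Mapping.single v b)) w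
      = Poly_Mapping.lookup (Poly_Mapping.single (u @ v) (a * b)) w"
    by (auto simp: lookup_single when_def)
qed

lemma fa_mult_add_left: "fa_mult (f1 + f2) g = fa_mult f1 g + fa_mult f2 g"
  by (rule poly_mapping_eqI) (simp add: lookup_fa_mult lookup_add distrib_right sum.distrib)

lemma fa_mult_add_right: "fa_mult g (f1 + f2) = fa_mult g f1 + fa_mult g f2"
  by (rule poly_mapping_eqI) (simp add: lookup_fa_mult lookup_add distrib_left sum.distrib)

lemma fa_mult_eq_times: "fa_mult f g = f * g"
proof (induction f rule: poly_mapping_induct)
  case zero then show ?case by (rule poly_mapping_eqI) (simp add: lookup_fa_mult)
next
  case (single u a)
  show ?case
  proof (induction g rule: poly_mapping_induct)
    case zero then show ?case by (rule poly_mapping_eqI) (simp add: lookup_fa_mult)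
  next
    case (single v b) then show ?case by (simp add: fa_mult_single single_mult_single_list)
  next
    case (add g1 g2) then show ?case by (simp add: fa_mult_add_right distrib_left)
  qed
next
  case (add f1 f2) then show ?case by (simp add: fa_mult_add_left distrib_right)
qed

lemma fa_comm_eq: "fa_comm a b = a * b - b * a"
  by (simp add: fa_comm_def fa_mult_eq_times)

lemma fa_comm_mult_right: "fa_comm y (a * b) = a * fa_comm y b + fa_comm y a * b"
  by (simp add: fa_comm_eq algebra_simps)

lemma fa_comm_mult_left: "fa_comm (a * b) y = a * fa_comm b y + fa_comm a y * b"
  by (simp add: fa_comm_eq algebra_simps)

lemma fa_comm_add_right: "fa_comm y (a + b) = fa_comm y a + fa_comm y b"
  by (simp add: fa_comm_eq algebra_simps)

lemma fa_comm_add_left: "fa_comm (a + b) y = fa_comm a y + fa_comm b y"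
  by (simp add: fa_comm_eq algebra_simps)

lemma fa_comm_antisym: "fa_comm a b = - fa_comm b a"
  by (simp add: fa_comm_eq)

lemma FA_eq: "FA TYPE(('v + 'v) list) TYPE('k::field) =
    \<lparr>carrier = UNIV, monoid.mult = (*), one = 1, zero = 0, add = (+)\<rparr>"
  unfolding FA_def by (simp add: single_Nil_one fun_eq_iff fa_mult_eq_times)

lemma ring_FA: "ring (FA TYPE(('v + 'v) list) TYPE('k::field))"
  unfolding FA_eq
  by (intro ringI abelian_groupI monoidI) (auto simp: algebra_simps intro: exI[of _ "- x" for x])

lemma FA_minus: "a \<ominus>\<^bsub>FA TYPE(('v + 'v) list) TYPE('k::field)\<^esub> b = a - b"
proof -
  interpret R: ring "FA TYPE(('v + 'v) list) TYPE('k)" by (rule ring_FA)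
  have "\<ominus>\<^bsub>FA TYPE(('v + 'v) list) TYPE('k)\<^esub> b = - b"
    by (rule R.minus_equality) (simp_all add: FA_eq)
  then show ?thesis by (simp add: a_minus_def FA_eq)
qed


section \<open>Congruence modulo the defining ideal of U(P)\<close>

lemma ideal_UP_ideal: "ideal (UP_ideal br) (FA TYPE(('v::{finite,linorder} + 'v) list) TYPE('k::field))"
  unfolding UP_ideal_def by (rule ring.genideal_ideal[OF ring_FA]) (simp add: FA_eq)

lemma UP_rels_subset_UP_ideal: "UP_rels br \<subseteq> UP_ideal br"
  unfolding UP_ideal_def by (rule ring.genideal_self[OF ring_FA]) (simp add: FA_eq)

lemma UP_ideal_zero: "0 \<in> UP_ideal br"
  using additive_subgroup.zero_closed[OF ideal.axioms(1)[OF ideal_UP_ideal]] by (simp add: FA_eq)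

lemma UP_ideal_add: "a \<in> UP_ideal br \<Longrightarrow> b \<in> UP_ideal br \<Longrightarrow> a + b \<in> UP_ideal br"
  using additive_subgroup.a_closed[OF ideal.axioms(1)[OF ideal_UP_ideal]] by (simp add: FA_eq)

lemma UP_ideal_mult_left: "a \<in> UP_ideal br \<Longrightarrow> x * a \<in> UP_ideal br"
  using ideal.I_l_closed[OF ideal_UP_ideal] by (fastforce simp add: FA_eq)

lemma UP_ideal_mult_right: "a \<in> UP_ideal br \<Longrightarrow> a * x \<in> UP_ideal br"
  using ideal.I_r_closed[OF ideal_UP_ideal] by (fastforce simp add: FA_eq)

lemma UP_ideal_uminus: "a \<in> UP_ideal br \<Longrightarrow> - a \<in> UP_ideal br"
  using UP_ideal_mult_left[of a br "-1"] by simp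

definition fa_cong ::
  "(('v::{finite,linorder}, 'k::field) mpoly \<Rightarrow> ('v, 'k) mpoly \<Rightarrow> ('v, 'k) mpoly)
   \<Rightarrow> ('v, 'k) fa \<Rightarrow> ('v, 'k) fa \<Rightarrow> bool" where
  "fa_cong br a b \<longleftrightarrow> a - b \<in> UP_ideal br"

lemma fa_cong_refl [simp]: "fa_cong br a a"
  by (simp add: fa_cong_def UP_ideal_zero)

lemma fa_cong_sym: "fa_cong br a b \<Longrightarrow> fa_cong br b a"
  unfolding fa_cong_def using UP_ideal_uminus by fastforce

lemma fa_cong_trans [trans]: "fa_cong br a b \<Longrightarrow> fa_cong br b c \<Longrightarrow> fa_cong br a c"
  unfolding fa_cong_def using UP_ideal_add by fastforce

lemma fa_cong_trans_eq1 [trans]: "a = b \<Longrightarrow> fa_cong br b c \<Longrightarrow> fa_cong br a c"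
  by simp

lemma fa_cong_trans_eq2 [trans]: "fa_cong br a b \<Longrightarrow> b = c \<Longrightarrow> fa_cong br a c"
  by simp

lemma fa_cong_add: "fa_cong br a a' \<Longrightarrow> fa_cong br b b' \<Longrightarrow> fa_cong br (a + b) (a' + b')"
  unfolding fa_cong_def using UP_ideal_add by (fastforce simp: algebra_simps)

lemma fa_cong_uminus: "fa_cong br a a' \<Longrightarrow> fa_cong br (- a) (- a')"
  unfolding fa_cong_def using UP_ideal_uminus by (fastforce simp: algebra_simps)

lemma fa_cong_diff: "fa_cong br a a' \<Longrightarrow> fa_cong br b b' \<Longrightarrow> fa_cong br (a - b) (a' - b')"
  using fa_cong_add[OF _ fa_cong_uminus] by (simp add: diff_conv_add_uminus del: add_uminus_conv_diff)

lemma fa_cong_mult: "fa_cong br a a' \<Longrightarrow> fa_cong br b b' \<Longrightarrow> fa_cong br (a * b) (a' * b')"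
proof -
  assume "fa_cong br a a'" "fa_cong br b b'"
  then have "(a - a') * b \<in> UP_ideal br" "a' * (b - b') \<in> UP_ideal br"
    unfolding fa_cong_def by (auto intro: UP_ideal_mult_left UP_ideal_mult_right)
  then have "(a - a') * b + a' * (b - b') \<in> UP_ideal br" by (rule UP_ideal_add)
  then show ?thesis unfolding fa_cong_def by (simp add: algebra_simps)
qed

lemma fa_cong_sum: "(\<And>i. i \<in> S \<Longrightarrow> fa_cong br (f i) (g i)) \<Longrightarrow> fa_cong br (sum f S) (sum g S)"
  by (induction S rule: infinite_finite_induct) (auto intro: fa_cong_add)

lemma fa_cong_comm:
  "fa_cong br a a' \<Longrightarrow> fa_cong br b b' \<Longrightarrow> fa_cong br (fa_comm a b) (fa_comm a' b')"
  unfolding fa_comm_eq by (intro fa_cong_diff fa_cong_mult)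

lemma fa_cong_comm_gen_swap:
  assumes "fa_comm (fa_gen g1) (fa_gen g2) \<in> UP_ideal br"
  shows "fa_cong br (Poly_Mapping.single (a @ g1 # g2 # r) c) (Poly_Mapping.single (a @ g2 # g1 # r) c)"
proof -
  have "Poly_Mapping.single a 1 * fa_comm (fa_gen g1) (fa_gen g2) * Poly_Mapping.single r c
      \<in> UP_ideal br"
    using assms by (intro UP_ideal_mult_left UP_ideal_mult_right)
  moreover have "Poly_Mapping.single a 1 * fa_comm (fa_gen g1) (fa_gen g2) * Poly_Mapping.single r c
     = Poly_Mapping.single (a @ g1 # g2 # r) c - Poly_Mapping.single (a @ g2 # g1 # r) c"
    by (simp add: fa_comm_eq fa_gen_def algebra_simps single_mult_single_list)
  ultimately show ?thesis by (simp add: fa_cong_def)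
qed


section \<open>Polynomials and partial derivatives\<close>

lemma mconst_0 [simp]: "mconst 0 = 0"
  by (simp add: mconst_def)

lemma mconst_1 [simp]: "mconst 1 = 1"
  by (simp add: mconst_def)

lemma single_eq_mconst_mult:
  "Poly_Mapping.single m c = mconst c * Poly_Mapping.single m (1 :: 'k::semiring_1)"
  by (simp add: mconst_def mult_single)

lemma lookup_mpderiv:
  "Poly_Mapping.lookup (mpderiv i f) m =
     of_nat (Poly_Mapping.lookup m i + 1) * Poly_Mapping.lookup f (m + Poly_Mapping.single i 1)"
proof -
  let ?c = "\<lambda>m. of_nat (Poly_Mapping.lookup m i + 1) *
    Poly_Mapping.lookup f (m + Poly_Mapping.single i 1)"
  have "{m. ?c m \<noteq> 0} \<subseteq> (\<lambda>m. m + Poly_Mapping.single i 1) -` Poly_Mapping.keys f"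
    by (auto simp: in_keys_iff)
  moreover have "finite ((\<lambda>m. m + Poly_Mapping.single i (1::nat)) -` Poly_Mapping.keys f)"
    by (rule finite_vimageI) (auto simp: inj_on_def)
  ultimately have "finite {m. ?c m \<noteq> 0}" by (rule finite_subset)
  then show ?thesis unfolding mpderiv_def by (simp add: Abs_poly_mapping_inverse)
qed

lemma mpderiv_add: "mpderiv i (f + g) = mpderiv i f + mpderiv i g"
  by (rule poly_mapping_eqI) (simp add: lookup_mpderiv lookup_add distrib_left)

lemma mpderiv_zero [simp]: "mpderiv i 0 = 0"
  by (rule poly_mapping_eqI) (simp add: lookup_mpderiv)

lemma mpderiv_single_eq_0:
  assumes "Poly_Mapping.lookup m i = 0"
  shows "mpderiv i (Poly_Mapping.single m c) = 0"
proof (rule poly_mapping_eqI)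
  fix n
  have "m \<noteq> n + Poly_Mapping.single i 1"
    using assms by (auto simp: lookup_add)
  then show "Poly_Mapping.lookup (mpderiv i (Poly_Mapping.single m c)) n = Poly_Mapping.lookup 0 n"
    by (simp add: lookup_mpderiv lookup_single when_def)
qed

lemma mpderiv_single_add_var:
  "mpderiv i (Poly_Mapping.single (m + Poly_Mapping.single i 1) c) =
     Poly_Mapping.single m (of_nat (Poly_Mapping.lookup m i + 1) * c)"
  by (rule poly_mapping_eqI) (auto simp: lookup_mpderiv lookup_single when_def)

lemma monom_split_var:
  fixes m :: "'v \<Rightarrow>\<^sub>0 nat"
  assumes "Poly_Mapping.lookup m i \<noteq> 0"
  obtains m' where "m = m' + Poly_Mapping.single i 1"
proof
  show "m = (m - Poly_Mapping.single i 1) + Poly_Mapping.single i 1"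
    using assms by (intro poly_mapping_eqI) (auto simp: lookup_add lookup_minus lookup_single when_def)
qed

lemma mpderiv_mult_single_free:
  fixes c d :: "'k::comm_semiring_1"
  assumes "Poly_Mapping.lookup m i = 0"
  shows "mpderiv i (Poly_Mapping.single m c * Poly_Mapping.single n d) =
     Poly_Mapping.single m c * mpderiv i (Poly_Mapping.single n d)"
proof (cases "Poly_Mapping.lookup n i = 0")
  case True
  then show ?thesis using assms by (simp add: mult_single mpderiv_single_eq_0 lookup_add)
next
  case False
  then obtain n' where n: "n = n' + Poly_Mapping.single i 1" by (rule monom_split_var)
  have "Poly_Mapping.single m c * Poly_Mapping.single n d =
      Poly_Mapping.single ((m + n') + Poly_Mapping.single i 1) (c * d)"
    by (simp add: mult_single n add.assoc)
  then have "mpderiv i (Poly_Mapping.single m c * Poly_Mapping.single n d) =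
      Poly_Mapping.single (m + n') (of_nat (Poly_Mapping.lookup (m + n') i + 1) * (c * d))"
    by (simp only: mpderiv_single_add_var)
  also have "\<dots> = Poly_Mapping.single m c * mpderiv i (Poly_Mapping.single n d)"
    unfolding n mpderiv_single_add_var mult_single using assms by (simp add: lookup_add mult_ac)
  finally show ?thesis .
qed

lemma mpderiv_mult_single:
  fixes c d :: "'k::comm_semiring_1"
  shows "mpderiv i (Poly_Mapping.single m c * Poly_Mapping.single n d) =
     Poly_Mapping.single m c * mpderiv i (Poly_Mapping.single n d) +
     Poly_Mapping.single n d * mpderiv i (Poly_Mapping.single m c)"
proof -
  consider "Poly_Mapping.lookup m i = 0" | "Poly_Mapping.lookup n i = 0"
    | m' n' where "m = m' + Poly_Mapping.single i 1" "n = n' + Poly_Mapping.single i 1"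
    by (metis monom_split_var)
  then show ?thesis
  proof cases
    case 1
    then show ?thesis by (simp add: mpderiv_mult_single_free mpderiv_single_eq_0)
  next
    case 2
    then show ?thesis
      by (simp add: mult.commute[of "Poly_Mapping.single m c"] mpderiv_mult_single_free
          mpderiv_single_eq_0)
  next
    case 3
    have "Poly_Mapping.single m c * Poly_Mapping.single n d =
        Poly_Mapping.single ((m' + n' + Poly_Mapping.single i 1) + Poly_Mapping.single i 1) (c * d)"
      by (simp add: mult_single 3 add_ac)
    then have "mpderiv i (Poly_Mapping.single m c * Poly_Mapping.single n d) =
        Poly_Mapping.single (m' + n' + Poly_Mapping.single i 1)
          (of_nat (Poly_Mapping.lookup (m' + n' + Poly_Mapping.single i 1) i + 1) * (c * d))"
      by (simp only: mpderiv_single_add_var)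
    also have "\<dots> = Poly_Mapping.single m c * mpderiv i (Poly_Mapping.single n d) +
        Poly_Mapping.single n d * mpderiv i (Poly_Mapping.single m c)"
      unfolding 3 mpderiv_single_add_var mult_single
      by (simp add: lookup_add add_ac mult_ac distrib_left distrib_right)
        (simp add: single_add[symmetric] add_ac)
    finally show ?thesis .
  qed
qed

lemma mpderiv_mult:
  fixes f g :: "('v, 'k::comm_semiring_1) mpoly"
  shows "mpderiv i (f * g) = f * mpderiv i g + g * mpderiv i f"
proof (induction f rule: poly_mapping_induct)
  case (single m c)
  show ?case
    by (induction g rule: poly_mapping_induct)
       (simp_all add: mpderiv_mult_single mpderiv_add algebra_simps)
qed (simp_all add: mpderiv_add algebra_simps)

lemma mpderiv_mconst [simp]: "mpderiv i (mconst c) = 0"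
  unfolding mconst_def by (rule mpderiv_single_eq_0) simp

lemma mpderiv_mvar: "mpderiv i (mvar j) = (if i = j then 1 else 0)"
  using mpderiv_single_add_var[of i 0 1]
  by (auto simp: mvar_def mpderiv_single_eq_0 lookup_single)

lemma mpoly_induct [case_names const var add mult]:
  fixes f :: "('v, 'k::comm_semiring_1) mpoly"
  assumes const: "\<And>c. P (mconst c)" and var: "\<And>i. P (mvar i)"
    and add: "\<And>f g. P f \<Longrightarrow> P g \<Longrightarrow> P (f + g)" and mult: "\<And>f g. P f \<Longrightarrow> P g \<Longrightarrow> P (f * g)"
  shows "P f"
proof (induction f rule: poly_mapping_induct)
  case zero then show ?case using const[of 0] by simp
next
  case (single m c)
  have "P (Poly_Mapping.single m 1)" for m :: "'v \<Rightarrow>\<^sub>0 nat"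
  proof (induction m rule: poly_mapping_induct)
    case zero then show ?case using const[of 1] by (simp add: mconst_def)
  next
    case (single i k)
    show ?case
    proof (induction k)
      case 0 then show ?case using const[of 1] by (simp add: mconst_def)
    next
      case (Suc k)
      have "Poly_Mapping.single (Poly_Mapping.single i (Suc k)) (1::'k) =
          mvar i * Poly_Mapping.single (Poly_Mapping.single i k) 1"
        by (simp add: mvar_def mult_single flip: single_add)
      then show ?case using mult[OF var Suc] by simp
    qed
  next
    case (add m1 m2) then show ?case using mult[OF add] by (simp add: mult_single)
  qed
  then show ?case by (subst single_eq_mconst_mult) (auto intro: mult const)
next
  case (add f g) then show ?case by (rule assms)
qed


section \<open>Lifting polynomials to the free algebra\<close>

text \<open>Only used on words in the x_v; a letter y_v would count like x_v.\<close>

definition word_monom :: "('v + 'v) list \<Rightarrow> ('v \<Rightarrow>\<^sub>0 nat)" where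
  "word_monom w = sum_list (map (\<lambda>g. Poly_Mapping.single (case_sum id id g) 1) w)"

lemma word_monom_Nil [simp]: "word_monom [] = 0"
  by (simp add: word_monom_def)

lemma word_monom_Cons [simp]:
  "word_monom (g # w) = Poly_Mapping.single (case_sum id id g) 1 + word_monom w"
  by (simp add: word_monom_def)

lemma word_monom_append [simp]: "word_monom (u @ w) = word_monom u + word_monom w"
  by (simp add: word_monom_def)

lemma word_monom_replicate [simp]: "word_monom (replicate k (Inl v)) = Poly_Mapping.single v k"
  by (induction k) (simp_all flip: single_add)

lemma word_monom_concat: "word_monom (concat ws) = sum_list (map word_monom ws)"
  by (induction ws) auto

lemma word_monom_xword [simp]: "word_monom (xword m) = m"
proof -
  have "word_monom (xword m) =
      sum_list (map (\<lambda>v. Poly_Mapping.single v (Poly_Mapping.lookup m v)) (sorted_list_of_set UNIV))"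
    unfolding xword_def by (simp add: word_monom_concat comp_def)
  also have "\<dots> = (\<Sum>v\<in>UNIV. Poly_Mapping.single v (Poly_Mapping.lookup m v))"
    by (simp add: sum_list_distinct_conv_sum_set)
  also have "\<dots> = m"
    by (rule poly_mapping_eqI) (simp add: lookup_sum lookup_single when_def)
  finally show ?thesis .
qed

lemma xword_0 [simp]: "xword 0 = []"
  unfolding xword_def by simp

lemma set_xword_subset_Inl: "set (xword m) \<subseteq> range Inl"
  unfolding xword_def by auto

lemma length_xword: "length (xword m) = mon_deg m"
  unfolding xword_def mon_deg_def by (simp add: length_concat comp_def sum_list_distinct_conv_sum_set)

lemma xword_single_1: "xword (Poly_Mapping.single i 1) = [Inl i]"
proof -
  have concat_delta: "distinct vs \<Longrightarrow>
      concat (map (\<lambda>v. replicate (if v = i then Suc 0 else 0) (Inl v)) vs) =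
      (if i \<in> set vs then [Inl i] else [])"
    for vs by (induction vs) auto
  have "xword (Poly_Mapping.single i 1) =
      concat (map (\<lambda>v. replicate (if v = i then Suc 0 else 0) (Inl v)) (sorted_list_of_set UNIV))"
    unfolding xword_def by (simp add: lookup_single when_def eq_commute)
  then show ?thesis by (simp add: concat_delta)
qed

lemma fa_lift_superset:
  assumes "finite S" "Poly_Mapping.keys f \<subseteq> S"
  shows "fa_lift f = (\<Sum>m\<in>S. Poly_Mapping.single (xword m) (Poly_Mapping.lookup f m))"
  unfolding fa_lift_def
  by (rule sum.mono_neutral_left) (use assms in \<open>auto simp: in_keys_iff\<close>)

lemma fa_lift_add: "fa_lift (f + g) = fa_lift f + fa_lift g"
proof -
  let ?S = "Poly_Mapping.keys f \<union> Poly_Mapping.keys g"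
  have "fa_lift (f + g) = (\<Sum>m\<in>?S. Poly_Mapping.single (xword m) (Poly_Mapping.lookup (f + g) m))"
    by (rule fa_lift_superset) (auto simp: keys_add)
  also have "\<dots> = (\<Sum>m\<in>?S. Poly_Mapping.single (xword m) (Poly_Mapping.lookup f m))
                + (\<Sum>m\<in>?S. Poly_Mapping.single (xword m) (Poly_Mapping.lookup g m))"
    by (simp add: lookup_add single_add sum.distrib)
  also have "\<dots> = fa_lift f + fa_lift g"
    by (subst (1 2) fa_lift_superset[of ?S]) auto
  finally show ?thesis .
qed

lemma fa_lift_0 [simp]: "fa_lift 0 = 0"
  by (simp add: fa_lift_def)

lemma fa_lift_uminus: "fa_lift (- f) = - fa_lift f"
  using fa_lift_add[of f "- f"] by (metis minus_unique fa_lift_0 add.right_inverse)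

lemma fa_lift_single: "fa_lift (Poly_Mapping.single m c) = Poly_Mapping.single (xword m) c"
  by (subst fa_lift_superset[of "{m}"]) auto

lemma fa_lift_mconst: "fa_lift (mconst c) = Poly_Mapping.single [] c"
  by (simp add: mconst_def fa_lift_single)

lemma fa_lift_1 [simp]: "fa_lift 1 = 1"
  using fa_lift_mconst[of 1] by (simp add: single_Nil_one)

lemma fa_lift_mvar: "fa_lift (mvar i) = fa_gen (Inl i)"
  by (simp only: mvar_def fa_gen_def fa_lift_single xword_single_1)

lemma fa_lift_mconst_mult: "fa_lift (mconst c * f) = Poly_Mapping.single [] c * fa_lift f"
proof (induction f rule: poly_mapping_induct)
  case (single k v) then show ?case
    by (simp add: mconst_def mult_single fa_lift_single plus_list_def)
qed (simp_all add: distrib_left fa_lift_add)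

lemma fa_gen_mult_single:
  "fa_gen g * Poly_Mapping.single w c = Poly_Mapping.single (g # w) (c :: 'k::semiring_1)"
  by (simp add: fa_gen_def single_mult_single_list)

lemma fa_comm_x_x_in_UP_ideal: "fa_comm (fa_gen (Inl i)) (fa_gen (Inl j)) \<in> UP_ideal br"
  using UP_rels_subset_UP_ideal[of br] unfolding UP_rels_def by blast

lemma fa_cong_move_x:
  assumes "set u \<subseteq> range Inl"
  shows "fa_cong br (Poly_Mapping.single (a @ Inl v # u @ r) c)
    (Poly_Mapping.single (a @ u @ Inl v # r) c)"
  using assms
proof (induction u arbitrary: a)
  case (Cons g u)
  then obtain w where g: "g = Inl w" by auto
  have "fa_cong br (Poly_Mapping.single (a @ Inl v # Inl w # u @ r) c)
      (Poly_Mapping.single (a @ Inl w # Inl v # u @ r) c)"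
    by (rule fa_cong_comm_gen_swap[OF fa_comm_x_x_in_UP_ideal])
  also have "fa_cong br \<dots> (Poly_Mapping.single ((a @ [Inl w]) @ u @ Inl v # r) c)"
    using Cons.IH[of "a @ [Inl w]"] Cons.prems by simp
  finally show ?case using g by simp
qed simp

definition xword_on :: "('v \<Rightarrow>\<^sub>0 nat) \<Rightarrow> 'v list \<Rightarrow> ('v + 'v) list" where
  "xword_on m vs = concat (map (\<lambda>v. replicate (Poly_Mapping.lookup m v) (Inl v)) vs)"

lemma xword_on_Nil [simp]: "xword_on m [] = []"
  by (simp add: xword_on_def)

lemma xword_on_Cons [simp]:
  "xword_on m (u # vs) = replicate (Poly_Mapping.lookup m u) (Inl u) @ xword_on m vs"
  by (simp add: xword_on_def)

lemma xword_on_add_single_notin: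
  "v \<notin> set vs \<Longrightarrow> xword_on (m + Poly_Mapping.single v 1) vs = xword_on m vs"
  by (induction vs) (auto simp: lookup_add lookup_single)

lemma fa_cong_insert_x:
  assumes "distinct vs" "v \<in> set vs"
  shows "fa_cong br (Poly_Mapping.single (a @ Inl v # xword_on m vs) c)
    (Poly_Mapping.single (a @ xword_on (m + Poly_Mapping.single v 1) vs) c)"
  using assms
proof (induction vs arbitrary: a)
  case (Cons u vs)
  show ?case
  proof (cases "u = v")
    case True
    then have "v \<notin> set vs" using Cons.prems by auto
    then show ?thesis
      using True by (simp add: xword_on_add_single_notin[simplified] lookup_add lookup_single)
  next
    case False
    then have v: "v \<in> set vs" "distinct vs" using Cons.prems by auto
    let ?r = "replicate (Poly_Mapping.lookup m u) (Inl u)"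
    have "fa_cong br (Poly_Mapping.single (a @ Inl v # ?r @ xword_on m vs) c)
        (Poly_Mapping.single (a @ ?r @ Inl v # xword_on m vs) c)"
      by (rule fa_cong_move_x) auto
    also have "fa_cong br \<dots>
        (Poly_Mapping.single ((a @ ?r) @ xword_on (m + Poly_Mapping.single v 1) vs) c)"
      using Cons.IH[OF v(2) v(1), of "a @ ?r"] by simp
    finally show ?thesis using False by (simp add: lookup_add lookup_single)
  qed
qed simp

text \<open>
  Since the x_v commute modulo the ideal, every word in the x_v is congruent to the sorted word
  of its monomial; this makes fa_lift multiplicative modulo the ideal.
\<close>

lemma fa_cong_x_word_lift:
  assumes "set w \<subseteq> range Inl"
  shows "fa_cong br (Poly_Mapping.single w c) (fa_lift (Poly_Mapping.single (word_monom w) c))"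
  using assms
proof (induction w arbitrary: c)
  case Nil then show ?case by (simp add: fa_lift_single)
next
  case (Cons g w)
  then obtain v where g: "g = Inl v" by auto
  have "Poly_Mapping.single (g # w) c = fa_gen (Inl v) * Poly_Mapping.single w c"
    by (simp add: fa_gen_mult_single g)
  also have "fa_cong br \<dots> (fa_gen (Inl v) * Poly_Mapping.single (xword (word_monom w)) c)"
    using Cons by (auto intro: fa_cong_mult simp: fa_lift_single)
  also have "fa_cong br \<dots> (Poly_Mapping.single (xword (word_monom w + Poly_Mapping.single v 1)) c)"
    using fa_cong_insert_x[of "sorted_list_of_set UNIV" v br "[]" "word_monom w" c]
    by (simp add: fa_gen_mult_single xword_def xword_on_def)
  also have "\<dots> = fa_lift (Poly_Mapping.single (word_monom (g # w)) c)"
    by (simp add: g fa_lift_single add.commute)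
  finally show ?case .
qed

lemma fa_cong_lift_mult: "fa_cong br (fa_lift f * fa_lift g) (fa_lift (f * g))"
proof (induction f rule: poly_mapping_induct)
  case (single m a)
  show ?case
  proof (induction g rule: poly_mapping_induct)
    case (single n b)
    have "fa_cong br (Poly_Mapping.single (xword m @ xword n) (a * b))
        (fa_lift (Poly_Mapping.single (word_monom (xword m @ xword n)) (a * b)))"
      by (rule fa_cong_x_word_lift) (use set_xword_subset_Inl in auto)
    then show ?case by (simp add: mult_single fa_lift_single single_mult_single_list plus_list_def)
  qed (simp_all add: distrib_left fa_lift_add fa_cong_add)
qed (simp_all add: distrib_right fa_lift_add fa_cong_add)

lemma fa_cong_lift_commute: "fa_cong br (fa_comm (fa_lift f) (fa_lift g)) 0"
proof -
  have "fa_cong br (fa_lift f * fa_lift g) (fa_lift (g * f))"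
    using fa_cong_lift_mult by (simp add: mult.commute)
  also have "fa_cong br \<dots> (fa_lift g * fa_lift f)"
    by (rule fa_cong_sym[OF fa_cong_lift_mult])
  finally show ?thesis by (simp add: fa_cong_def fa_comm_eq)
qed


section \<open>The relations of U(P) hold for all polynomials\<close>

context
  fixes br :: "('v, 'k::field) mpoly \<Rightarrow> ('v, 'k) mpoly \<Rightarrow> ('v, 'k) mpoly"
  assumes PB: "poisson_bracket br"
begin

lemma br_add_left: "br (a + b) c = br a c + br b c"
  using PB unfolding poisson_bracket_def by blast

lemma br_antisym: "br a b = - br b a"
  using PB unfolding poisson_bracket_def by blast

lemma br_add_right: "br c (a + b) = br c a + br c b"
  by (metis br_add_left br_antisym minus_add_distrib)

lemma br_mult_right: "br a (b * c) = br a b * c + b * br a c"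
  using PB unfolding poisson_bracket_def by blast

lemma br_mult_left: "br (a * b) c = br a c * b + a * br b c"
proof -
  have "br (a * b) c = - (br c a * b + a * br c b)"
    using br_antisym[of "a * b" c] by (simp add: br_mult_right)
  then show ?thesis using br_antisym[of c a] br_antisym[of c b] by simp
qed

lemma br_one_right: "br a 1 = 0"
  using br_mult_right[of a 1 1] by simp

lemma br_mconst_right [simp]: "br a (mconst c) = 0"
proof -
  have "br (mconst c * 1) a = mconst c * br 1 a"
    using PB unfolding poisson_bracket_def by blast
  then show ?thesis using br_antisym[of 1 a] br_antisym[of "mconst c" a] by (simp add: br_one_right)
qed

lemma br_mconst_left [simp]: "br (mconst c) a = 0"
  using br_antisym[of "mconst c" a] by simp

end

definition fa_beta :: "('v::{finite,linorder}, 'k::field) mpoly \<Rightarrow> ('v, 'k) fa" where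
  "fa_beta f = (\<Sum>k\<in>UNIV. fa_lift (mpderiv k f) * fa_gen (Inr k))"

lemma fa_beta_add: "fa_beta (f + g) = fa_beta f + fa_beta g"
  by (simp add: fa_beta_def mpderiv_add fa_lift_add distrib_right sum.distrib)

lemma fa_beta_0 [simp]: "fa_beta 0 = 0"
  by (simp add: fa_beta_def)

lemma fa_beta_mconst [simp]: "fa_beta (mconst c) = 0"
  by (simp add: fa_beta_def)

lemma fa_beta_mvar: "fa_beta (mvar i) = fa_gen (Inr i)"
proof -
  have "fa_beta (mvar i) = (\<Sum>k\<in>UNIV. if k = i then fa_gen (Inr k) else 0)"
    unfolding fa_beta_def by (rule sum.cong) (auto simp: mpderiv_mvar)
  then show ?thesis by simp
qed

lemma fa_cong_beta_mult: "fa_cong br (fa_beta (f * g)) (fa_lift f * fa_beta g + fa_lift g * fa_beta f)"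
proof -
  have "fa_beta (f * g) =
      (\<Sum>k\<in>UNIV. (fa_lift (f * mpderiv k g) + fa_lift (g * mpderiv k f)) * fa_gen (Inr k))"
    by (simp add: fa_beta_def mpderiv_mult fa_lift_add)
  also have "fa_cong br \<dots> (\<Sum>k\<in>UNIV. (fa_lift f * fa_lift (mpderiv k g) +
      fa_lift g * fa_lift (mpderiv k f)) * fa_gen (Inr k))"
    by (intro fa_cong_sum fa_cong_mult fa_cong_add fa_cong_sym[OF fa_cong_lift_mult] fa_cong_refl)
  also have "\<dots> = fa_lift f * fa_beta g + fa_lift g * fa_beta f"
    by (simp add: fa_beta_def sum_distrib_left distrib_right sum.distrib mult.assoc)
  finally show ?thesis .
qed

lemma fa_cong_comm_y_x:
  "fa_cong br (fa_comm (fa_gen (Inr i)) (fa_lift (mvar j))) (fa_lift (br (mvar i) (mvar j)))"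
  using UP_rels_subset_UP_ideal[of br] by (auto simp: UP_rels_def fa_cong_def fa_lift_mvar)

lemma fa_cong_comm_y_y:
  "fa_cong br (fa_comm (fa_gen (Inr i)) (fa_gen (Inr j))) (fa_beta (br (mvar i) (mvar j)))"
  using UP_rels_subset_UP_ideal[of br]
  by (auto simp: UP_rels_def fa_cong_def fa_beta_def fa_mult_eq_times)

context
  fixes br :: "('v::{finite,linorder}, 'k::field) mpoly \<Rightarrow> ('v, 'k) mpoly \<Rightarrow> ('v, 'k) mpoly"
  assumes PB: "poisson_bracket br"
begin

lemma fa_cong_comm_y_lift:
  "fa_cong br (fa_comm (fa_gen (Inr i)) (fa_lift g)) (fa_lift (br (mvar i) g))"
proof (induction g rule: mpoly_induct)
  case (const c) then show ?case
    by (simp add: fa_lift_mconst br_mconst_right[OF PB] fa_comm_eq single_Nil_mult_commute)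
next
  case (var j) then show ?case by (rule fa_cong_comm_y_x)
next
  case (add f g) then show ?case
    by (simp add: fa_lift_add fa_comm_add_right br_add_right[OF PB] fa_cong_add)
next
  case (mult g h)
  have "fa_cong br (fa_comm (fa_gen (Inr i)) (fa_lift (g * h)))
      (fa_comm (fa_gen (Inr i)) (fa_lift g * fa_lift h))"
    by (intro fa_cong_comm fa_cong_refl fa_cong_sym[OF fa_cong_lift_mult])
  also have "\<dots> = fa_lift g * fa_comm (fa_gen (Inr i)) (fa_lift h) +
      fa_comm (fa_gen (Inr i)) (fa_lift g) * fa_lift h"
    by (rule fa_comm_mult_right)
  also have "fa_cong br \<dots> (fa_lift g * fa_lift (br (mvar i) h) + fa_lift (br (mvar i) g) * fa_lift h)"
    by (intro fa_cong_add fa_cong_mult fa_cong_refl mult)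
  also have "fa_cong br \<dots> (fa_lift (g * br (mvar i) h) + fa_lift (br (mvar i) g * h))"
    by (intro fa_cong_add fa_cong_lift_mult)
  also have "\<dots> = fa_lift (br (mvar i) (g * h))"
    by (simp add: br_mult_right[OF PB] fa_lift_add add.commute)
  finally show ?case .
qed

lemma fa_cong_comm_beta_lift: "fa_cong br (fa_comm (fa_beta f) (fa_lift g)) (fa_lift (br f g))"
proof (induction f arbitrary: g rule: mpoly_induct)
  case (const c) then show ?case by (simp add: br_mconst_left[OF PB] fa_comm_eq)
next
  case (var i) then show ?case by (simp add: fa_beta_mvar fa_cong_comm_y_lift)
next
  case (add f1 f2) then show ?case
    by (simp add: fa_beta_add fa_lift_add fa_comm_add_left br_add_left[OF PB] fa_cong_add)
next
  case (mult f1 f2)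
  have "fa_cong br (fa_comm (fa_beta (f1 * f2)) (fa_lift g))
      (fa_comm (fa_lift f1 * fa_beta f2 + fa_lift f2 * fa_beta f1) (fa_lift g))"
    by (intro fa_cong_comm fa_cong_refl fa_cong_beta_mult)
  also have "\<dots> = fa_lift f1 * fa_comm (fa_beta f2) (fa_lift g) +
         fa_comm (fa_lift f1) (fa_lift g) * fa_beta f2
       + (fa_lift f2 * fa_comm (fa_beta f1) (fa_lift g) + fa_comm (fa_lift f2) (fa_lift g) * fa_beta f1)"
    by (simp add: fa_comm_add_left fa_comm_mult_left)
  also have "fa_cong br \<dots> (fa_lift f1 * fa_lift (br f2 g) + 0 * fa_beta f2
       + (fa_lift f2 * fa_lift (br f1 g) + 0 * fa_beta f1))"
    by (intro fa_cong_add fa_cong_mult fa_cong_refl mult fa_cong_lift_commute)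
  also have "fa_cong br \<dots> (fa_lift (f1 * br f2 g) + fa_lift (br f1 g * f2))"
    by (simp only: mult_zero_left add_0_right mult.commute[of "br f1 g" f2])
      (intro fa_cong_add fa_cong_lift_mult)
  also have "\<dots> = fa_lift (br (f1 * f2) g)"
    by (simp add: br_mult_left[OF PB] fa_lift_add add.commute)
  finally show ?case .
qed

lemma fa_cong_comm_y_beta:
  "fa_cong br (fa_comm (fa_gen (Inr i)) (fa_beta g)) (fa_beta (br (mvar i) g))"
proof (induction g rule: mpoly_induct)
  case (const c) then show ?case by (simp add: br_mconst_right[OF PB] fa_comm_eq)
next
  case (var j) then show ?case by (simp add: fa_beta_mvar fa_cong_comm_y_y)
next
  case (add f g) then show ?case
    by (simp add: fa_beta_add fa_comm_add_right br_add_right[OF PB] fa_cong_add)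
next
  case (mult g h)
  let ?y = "fa_gen (Inr i)" and ?x = "mvar i"
  have "fa_cong br (fa_comm ?y (fa_beta (g * h)))
      (fa_comm ?y (fa_lift g * fa_beta h + fa_lift h * fa_beta g))"
    by (intro fa_cong_comm fa_cong_refl fa_cong_beta_mult)
  also have "\<dots> = fa_lift g * fa_comm ?y (fa_beta h) + fa_comm ?y (fa_lift g) * fa_beta h
       + (fa_lift h * fa_comm ?y (fa_beta g) + fa_comm ?y (fa_lift h) * fa_beta g)"
    by (simp add: fa_comm_add_right fa_comm_mult_right)
  also have "fa_cong br \<dots> (fa_lift g * fa_beta (br ?x h) + fa_lift (br ?x g) * fa_beta h
       + (fa_lift h * fa_beta (br ?x g) + fa_lift (br ?x h) * fa_beta g))"
    by (intro fa_cong_add fa_cong_mult fa_cong_refl mult fa_cong_comm_y_lift)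
  also have "\<dots> = (fa_lift g * fa_beta (br ?x h) + fa_lift (br ?x h) * fa_beta g)
       + (fa_lift (br ?x g) * fa_beta h + fa_lift h * fa_beta (br ?x g))"
    by (simp add: algebra_simps)
  also have "fa_cong br \<dots> (fa_beta (g * br ?x h) + fa_beta (br ?x g * h))"
    by (intro fa_cong_add fa_cong_sym[OF fa_cong_beta_mult])
  also have "\<dots> = fa_beta (br ?x (g * h))"
    by (simp add: br_mult_right[OF PB] fa_beta_add add.commute)
  finally show ?case .
qed

lemma fa_cong_comm_lift_beta: "fa_cong br (fa_comm (fa_lift f) (fa_beta g)) (fa_lift (br f g))"
proof -
  have "fa_comm (fa_lift f) (fa_beta g) = - fa_comm (fa_beta g) (fa_lift f)"
    by (rule fa_comm_antisym)
  also have "fa_cong br \<dots> (- fa_lift (br g f))"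
    by (intro fa_cong_uminus fa_cong_comm_beta_lift)
  also have "\<dots> = fa_lift (br f g)"
    by (simp add: br_antisym[OF PB, of g f] fa_lift_uminus)
  finally show ?thesis .
qed

lemma fa_cong_comm_beta_beta: "fa_cong br (fa_comm (fa_beta f) (fa_beta g)) (fa_beta (br f g))"
proof (induction f arbitrary: g rule: mpoly_induct)
  case (const c) then show ?case by (simp add: br_mconst_left[OF PB] fa_comm_eq)
next
  case (var i) then show ?case by (simp add: fa_beta_mvar fa_cong_comm_y_beta)
next
  case (add f1 f2) then show ?case
    by (simp add: fa_beta_add fa_comm_add_left br_add_left[OF PB] fa_cong_add)
next
  case (mult f1 f2)
  have "fa_cong br (fa_comm (fa_beta (f1 * f2)) (fa_beta g))
      (fa_comm (fa_lift f1 * fa_beta f2 + fa_lift f2 * fa_beta f1) (fa_beta g))"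
    by (intro fa_cong_comm fa_cong_refl fa_cong_beta_mult)
  also have "\<dots> = fa_lift f1 * fa_comm (fa_beta f2) (fa_beta g) +
         fa_comm (fa_lift f1) (fa_beta g) * fa_beta f2
       + (fa_lift f2 * fa_comm (fa_beta f1) (fa_beta g) + fa_comm (fa_lift f2) (fa_beta g) * fa_beta f1)"
    by (simp add: fa_comm_add_left fa_comm_mult_left)
  also have "fa_cong br \<dots> (fa_lift f1 * fa_beta (br f2 g) + fa_lift (br f1 g) * fa_beta f2
       + (fa_lift f2 * fa_beta (br f1 g) + fa_lift (br f2 g) * fa_beta f1))"
    by (intro fa_cong_add fa_cong_mult fa_cong_refl mult fa_cong_comm_lift_beta)
  also have "\<dots> = (fa_lift (br f1 g) * fa_beta f2 + fa_lift f2 * fa_beta (br f1 g))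
       + (fa_lift f1 * fa_beta (br f2 g) + fa_lift (br f2 g) * fa_beta f1)"
    by (simp add: algebra_simps)
  also have "fa_cong br \<dots> (fa_beta (br f1 g * f2) + fa_beta (f1 * br f2 g))"
    by (intro fa_cong_add fa_cong_sym[OF fa_cong_beta_mult])
  also have "\<dots> = fa_beta (br (f1 * f2) g)"
    by (simp add: br_mult_left[OF PB] fa_beta_add)
  finally show ?case .
qed

end


section \<open>Substitution homomorphisms of the free algebra\<close>

definition fa_subst :: "('v + 'v \<Rightarrow> ('v, 'k::field) fa) \<Rightarrow> ('v, 'k) fa \<Rightarrow> ('v, 'k) fa" where
  "fa_subst G f =
     (\<Sum>w\<in>Poly_Mapping.keys f. Poly_Mapping.single [] (Poly_Mapping.lookup f w) * prod_list (map G w))"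

lemma fa_subst_superset:
  assumes "finite S" "Poly_Mapping.keys f \<subseteq> S"
  shows "fa_subst G f = (\<Sum>w\<in>S. Poly_Mapping.single [] (Poly_Mapping.lookup f w) * prod_list (map G w))"
  unfolding fa_subst_def
  by (rule sum.mono_neutral_left) (use assms in \<open>auto simp: in_keys_iff\<close>)

lemma fa_subst_add: "fa_subst G (f + g) = fa_subst G f + fa_subst G g"
proof -
  let ?S = "Poly_Mapping.keys f \<union> Poly_Mapping.keys g"
  have "fa_subst G (f + g) =
      (\<Sum>w\<in>?S. Poly_Mapping.single [] (Poly_Mapping.lookup (f + g) w) * prod_list (map G w))"
    by (rule fa_subst_superset) (auto simp: keys_add)
  also have "\<dots> = (\<Sum>w\<in>?S. Poly_Mapping.single [] (Poly_Mapping.lookup f w) * prod_list (map G w))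
                + (\<Sum>w\<in>?S. Poly_Mapping.single [] (Poly_Mapping.lookup g w) * prod_list (map G w))"
    by (simp add: lookup_add single_add sum.distrib distrib_right)
  also have "\<dots> = fa_subst G f + fa_subst G g"
    by (subst (1 2) fa_subst_superset[of ?S]) auto
  finally show ?thesis .
qed

lemma fa_subst_0 [simp]: "fa_subst G 0 = 0"
  by (simp add: fa_subst_def)

lemma fa_subst_diff: "fa_subst G (f - g) = fa_subst G f - fa_subst G g"
  using fa_subst_add[of G "f - g" g] by (simp add: algebra_simps)

lemma fa_subst_sum: "fa_subst G (sum f S) = (\<Sum>s\<in>S. fa_subst G (f s))"
  by (induction S rule: infinite_finite_induct) (auto simp: fa_subst_add)

lemma fa_subst_single:
  "fa_subst G (Poly_Mapping.single w c) = Poly_Mapping.single [] c * prod_list (map G w)"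
  by (subst fa_subst_superset[of "{w}"]) auto

lemma fa_subst_mult: "fa_subst G (f * g) = fa_subst G f * fa_subst G g"
proof (induction f rule: poly_mapping_induct)
  case (single u a)
  show ?case
  proof (induction g rule: poly_mapping_induct)
    case (single v b)
    let ?u = "prod_list (map G u)" and ?v = "prod_list (map G v)"
    have "(Poly_Mapping.single [] a * ?u) * (Poly_Mapping.single [] b * ?v) =
        Poly_Mapping.single [] a * (?u * Poly_Mapping.single [] b) * ?v"
      by (simp only: mult.assoc)
    also have "\<dots> = (Poly_Mapping.single [] a * Poly_Mapping.single [] b) * (?u * ?v)"
      by (simp only: single_Nil_mult_commute[of b ?u, symmetric] mult.assoc)
    finally show ?case
      by (simp add: single_mult_single_list fa_subst_single)
  qed (simp_all add: distrib_left fa_subst_add)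
qed (simp_all add: distrib_right fa_subst_add)

lemma fa_subst_scalar [simp]: "fa_subst G (Poly_Mapping.single [] c) = Poly_Mapping.single [] c"
  by (simp add: fa_subst_single)

lemma fa_subst_1 [simp]: "fa_subst G 1 = 1"
  by (simp add: fa_subst_single single_mult_single_list flip: single_Nil_one)

lemma fa_subst_gen [simp]: "fa_subst G (fa_gen g) = G g"
  by (simp add: fa_gen_def fa_subst_single single_Nil_one)

lemma fa_subst_ring_hom:
  "fa_subst G \<in> ring_hom (FA TYPE(('v + 'v) list) TYPE('k::field)) (FA TYPE(('v + 'v) list) TYPE('k))"
  by (rule ring_hom_memI) (auto simp: FA_eq fa_subst_mult fa_subst_add)

context
  fixes br :: "('v::{finite,linorder}, 'k::field) mpoly \<Rightarrow> ('v, 'k) mpoly \<Rightarrow> ('v, 'k) mpoly"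
begin

lemma ring_UP: "ring (UP br)"
  unfolding UP_def by (rule ideal.quotient_is_ring[OF ideal_UP_ideal])

lemma carrier_UP: "carrier (UP br) = range (up_class br)"
  by (auto simp: UP_def FactRing_def A_RCOSETS_def' up_class_def FA_eq)

lemma up_class_in_carrier [simp]: "up_class br a \<in> carrier (UP br)"
  by (simp add: carrier_UP)

lemma carrier_UP_obtain:
  assumes "X \<in> carrier (UP br)" obtains a where "X = up_class br a"
  using assms by (auto simp: carrier_UP)

lemma up_class_eq_iff: "up_class br a = up_class br b \<longleftrightarrow> fa_cong br a b"
  using ring.quotient_eq_iff_same_a_r_cos[OF ring_FA ideal_UP_ideal, of a b br]
  by (simp only: FA_minus) (simp add: fa_cong_def up_class_def FA_eq)

lemma up_class_mult: "up_class br a \<otimes>\<^bsub>UP br\<^esub> up_class br b = up_class br (a * b)"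
  using ideal.rcoset_mult_add[OF ideal_UP_ideal, of a b br]
  by (simp add: UP_def FactRing_def up_class_def FA_eq)

lemma up_class_add: "up_class br a \<oplus>\<^bsub>UP br\<^esub> up_class br b = up_class br (a + b)"
  using ideal.a_rcos_sum[OF ideal_UP_ideal, of a b br]
  by (simp add: UP_def FactRing_def up_class_def FA_eq)

lemma UP_zero: "\<zero>\<^bsub>UP br\<^esub> = up_class br 0"
  using ring.a_rcos_zero[OF ring_FA ideal_UP_ideal UP_ideal_zero, of br]
  by (simp add: UP_def FactRing_def up_class_def)

lemma UP_one: "\<one>\<^bsub>UP br\<^esub> = up_class br 1"
  by (simp add: UP_def FactRing_def up_class_def FA_eq)

lemma up_class_sum: "finsum (UP br) (\<lambda>k. up_class br (f k)) S = up_class br (sum f S)" if "finite S"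
  using that
proof (induction S rule: finite_induct)
  case empty
  interpret U: ring "UP br" by (rule ring_UP)
  show ?case by (simp add: UP_zero)
next
  case (insert x F)
  interpret U: ring "UP br" by (rule ring_UP)
  have "finsum (UP br) (\<lambda>k. up_class br (f k)) (insert x F) =
      up_class br (f x) \<oplus>\<^bsub>UP br\<^esub> finsum (UP br) (\<lambda>k. up_class br (f k)) F"
    by (rule U.finsum_insert) (use insert in auto)
  then show ?case using insert by (simp add: up_class_add)
qed

lemma up_beta_eq_class: "up_beta br f = up_class br (fa_beta f)"
  by (simp add: up_beta_def up_alpha_def up_y_def up_class_mult up_class_sum fa_beta_def)

lemma up_alpha_mvar: "up_alpha br (mvar i) = up_class br (fa_gen (Inl i))"
  by (simp add: up_alpha_def fa_lift_mvar)

lemma up_beta_mvar: "up_beta br (mvar i) = up_class br (fa_gen (Inr i))"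
  by (simp add: up_beta_eq_class fa_beta_mvar)

lemma UP_hom_eqI:
  assumes h1: "h1 \<in> ring_hom (UP br) (UP br)" and h2: "h2 \<in> ring_hom (UP br) (UP br)"
    and scalar1: "\<And>c X. X \<in> carrier (UP br) \<Longrightarrow>
      h1 (up_scalar br c \<otimes>\<^bsub>UP br\<^esub> X) = up_scalar br c \<otimes>\<^bsub>UP br\<^esub> h1 X"
    and scalar2: "\<And>c X. X \<in> carrier (UP br) \<Longrightarrow>
      h2 (up_scalar br c \<otimes>\<^bsub>UP br\<^esub> X) = up_scalar br c \<otimes>\<^bsub>UP br\<^esub> h2 X"
    and gen: "\<And>g. h1 (up_class br (fa_gen g)) = h2 (up_class br (fa_gen g))"
    and X: "X \<in> carrier (UP br)"
  shows "h1 X = h2 X"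
proof -
  obtain a where a: "X = up_class br a" using X by (rule carrier_UP_obtain)
  have word: "h1 (up_class br (Poly_Mapping.single w 1)) = h2 (up_class br (Poly_Mapping.single w 1))"
    for w
  proof (induction w)
    case Nil
    then show ?case using ring_hom_one[OF h1] ring_hom_one[OF h2] by (simp add: UP_one single_Nil_one)
  next
    case (Cons g w)
    have "up_class br (Poly_Mapping.single (g # w) 1) =
        up_class br (fa_gen g) \<otimes>\<^bsub>UP br\<^esub> up_class br (Poly_Mapping.single w 1)"
      by (simp add: up_class_mult fa_gen_mult_single)
    then show ?case using Cons by (simp add: ring_hom_mult[OF h1] ring_hom_mult[OF h2] gen)
  qed
  have "h1 (up_class br a) = h2 (up_class br a)"
  proof (induction a rule: poly_mapping_induct)
    case zero
    then show ?case
      using ring_hom_zero[OF h1 ring_UP ring_UP] ring_hom_zero[OF h2 ring_UP ring_UP]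
      by (simp add: UP_zero)
  next
    case (single w c)
    have "up_class br (Poly_Mapping.single w c) =
        up_scalar br c \<otimes>\<^bsub>UP br\<^esub> up_class br (Poly_Mapping.single w 1)"
      by (simp add: up_scalar_def up_class_mult single_mult_single_list)
    then show ?case by (simp only: scalar1 scalar2 word up_class_in_carrier)
  next
    case (add f g)
    have "h (up_class br (f + g)) = h (up_class br f) \<oplus>\<^bsub>UP br\<^esub> h (up_class br g)"
      if "h \<in> ring_hom (UP br) (UP br)" for h
      unfolding up_class_add[symmetric] by (rule ring_hom_add[OF that]) auto
    then show ?case using add h1 h2 by metis
  qed
  then show ?thesis using a by simp
qed

end


section \<open>Endomorphisms of U(P) induced by generator assignments\<close>

lemma fa_subst_UP_ideal:
  fixes br :: "('v::{finite,linorder}, 'k::field) mpoly \<Rightarrow> ('v, 'k) mpoly \<Rightarrow> ('v, 'k) mpoly"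
  assumes rels: "\<And>r. r \<in> UP_rels br \<Longrightarrow> fa_subst G r \<in> UP_ideal br"
    and a: "a \<in> UP_ideal br"
  shows "fa_subst G a \<in> UP_ideal br"
proof -
  let ?FA = "FA TYPE(('v + 'v) list) TYPE('k)"
  let ?h = "up_class br \<circ> fa_subst G"
  have "up_class br = a_r_coset ?FA (UP_ideal br)"
    by (intro ext) (simp add: up_class_def)
  then have "?h \<in> ring_hom ?FA (UP br)"
    using ideal.rcos_ring_hom[OF ideal_UP_ideal] fa_subst_ring_hom unfolding UP_def
    by (metis ring_hom_trans)
  then interpret h: ring_hom_ring ?FA "UP br" ?h
    by (rule ring_hom_ringI2[OF ring_FA ring_UP])
  have "UP_rels br \<subseteq> a_kernel ?FA (UP br) ?h"
    using rels by (auto simp: a_kernel_def' FA_eq UP_zero up_class_eq_iff fa_cong_def)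
  then have "UP_ideal br \<subseteq> a_kernel ?FA (UP br) ?h"
    unfolding UP_ideal_def by (rule ring.genideal_minimal[OF ring_FA h.kernel_is_ideal])
  with a show ?thesis
    by (auto simp: a_kernel_def' UP_zero up_class_eq_iff fa_cong_def)
qed

text \<open>The choice of a representative is harmless because fa_subst G preserves the ideal.\<close>

definition UP_subst ::
  "(('v::{finite,linorder}, 'k::field) mpoly \<Rightarrow> ('v, 'k) mpoly \<Rightarrow> ('v, 'k) mpoly)
   \<Rightarrow> ('v + 'v \<Rightarrow> ('v, 'k) fa) \<Rightarrow> ('v, 'k) fa set \<Rightarrow> ('v, 'k) fa set" where
  "UP_subst br G X = up_class br (fa_subst G (SOME a. X = up_class br a))"

definition fa_homog :: "nat \<Rightarrow> ('v, 'k::field) fa \<Rightarrow> bool" where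
  "fa_homog d f \<longleftrightarrow> (\<forall>w\<in>Poly_Mapping.keys f. length w = d)"

lemma fa_homog_0 [simp]: "fa_homog d 0"
  by (simp add: fa_homog_def)

lemma fa_homog_add: "fa_homog d f \<Longrightarrow> fa_homog d g \<Longrightarrow> fa_homog d (f + g)"
  unfolding fa_homog_def using keys_add[of f g] by blast

lemma fa_homog_sum: "(\<And>i. i \<in> S \<Longrightarrow> fa_homog d (f i)) \<Longrightarrow> fa_homog d (sum f S)"
  by (induction S rule: infinite_finite_induct) (auto intro: fa_homog_add)

lemma fa_homog_mult: "fa_homog d f \<Longrightarrow> fa_homog e g \<Longrightarrow> fa_homog (d + e) (f * g)"
  unfolding fa_homog_def using keys_mult[of f g] by (fastforce simp: plus_list_def)

lemma fa_homog_single: "fa_homog (length w) (Poly_Mapping.single w c)"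
  by (simp add: fa_homog_def)

lemma fa_homog_scalar_mult: "fa_homog d f \<Longrightarrow> fa_homog d (Poly_Mapping.single [] c * f)"
  using fa_homog_mult[OF fa_homog_single[of "[]"]] by fastforce

lemma fa_homog_prod_list: "(\<And>g. fa_homog 1 (G g)) \<Longrightarrow> fa_homog (length w) (prod_list (map G w))"
proof (induction w)
  case Nil then show ?case using fa_homog_single[of "[]" 1] by (simp add: single_Nil_one)
next
  case (Cons g w) then show ?case using fa_homog_mult[of 1 "G g" "length w"] by simp
qed

lemma fa_homog_subst:
  assumes G: "\<And>g. fa_homog 1 (G g)" and f: "fa_homog d f"
  shows "fa_homog d (fa_subst G f)"
  unfolding fa_subst_def
proof (rule fa_homog_sum)
  fix w assume "w \<in> Poly_Mapping.keys f"
  then have "length w = d" using f by (simp add: fa_homog_def)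
  then show "fa_homog d (Poly_Mapping.single [] (Poly_Mapping.lookup f w) * prod_list (map G w))"
    using fa_homog_scalar_mult[OF fa_homog_prod_list[of G w, OF G]] by simp
qed

context
  fixes br :: "('v::{finite,linorder}, 'k::field) mpoly \<Rightarrow> ('v, 'k) mpoly \<Rightarrow> ('v, 'k) mpoly"
    and G :: "'v + 'v \<Rightarrow> ('v, 'k) fa"
  assumes rels: "\<And>r. r \<in> UP_rels br \<Longrightarrow> fa_subst G r \<in> UP_ideal br"
begin

lemma fa_cong_subst: "fa_cong br a b \<Longrightarrow> fa_cong br (fa_subst G a) (fa_subst G b)"
  unfolding fa_cong_def using fa_subst_UP_ideal[OF rels] by (simp flip: fa_subst_diff)

lemma UP_subst_class: "UP_subst br G (up_class br a) = up_class br (fa_subst G a)"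
proof -
  let ?a = "SOME a'. up_class br a = up_class br a'"
  have "up_class br a = up_class br ?a" by (rule someI) (rule refl)
  then have "fa_cong br (fa_subst G ?a) (fa_subst G a)"
    by (intro fa_cong_subst) (simp add: up_class_eq_iff fa_cong_sym)
  then show ?thesis unfolding UP_subst_def by (simp add: up_class_eq_iff)
qed

lemma UP_subst_ring_hom: "UP_subst br G \<in> ring_hom (UP br) (UP br)"
proof (rule ring_hom_memI)
  fix X assume "X \<in> carrier (UP br)"
  then show "UP_subst br G X \<in> carrier (UP br)"
    by (auto elim: carrier_UP_obtain simp: UP_subst_class)
next
  fix X Y assume "X \<in> carrier (UP br)" "Y \<in> carrier (UP br)"
  then obtain a b where "X = up_class br a" "Y = up_class br b" by (metis carrier_UP_obtain)
  then show "UP_subst br G (X \<otimes>\<^bsub>UP br\<^esub> Y) = UP_subst br G X \<otimes>\<^bsub>UP br\<^esub> UP_subst br G Y"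
    and "UP_subst br G (X \<oplus>\<^bsub>UP br\<^esub> Y) = UP_subst br G X \<oplus>\<^bsub>UP br\<^esub> UP_subst br G Y"
    by (simp_all add: UP_subst_class up_class_mult up_class_add fa_subst_mult fa_subst_add)
next
  show "UP_subst br G \<one>\<^bsub>UP br\<^esub> = \<one>\<^bsub>UP br\<^esub>"
    by (simp add: UP_one UP_subst_class)
qed

lemma UP_subst_scalar:
  "X \<in> carrier (UP br) \<Longrightarrow>
     UP_subst br G (up_scalar br c \<otimes>\<^bsub>UP br\<^esub> X) = up_scalar br c \<otimes>\<^bsub>UP br\<^esub> UP_subst br G X"
  by (erule carrier_UP_obtain) (simp add: UP_subst_class up_scalar_def up_class_mult fa_subst_mult)

lemma UP_subst_homog:
  assumes "\<And>g. fa_homog 1 (G g)"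
  shows "UP_subst br G ` up_homog br d \<subseteq> up_homog br d"
proof
  fix Z assume "Z \<in> UP_subst br G ` up_homog br d"
  then obtain f where f: "fa_homog d f" and Z: "Z = UP_subst br G (up_class br f)"
    by (auto simp: up_homog_def fa_homog_def)
  have "fa_homog d (fa_subst G f)"
    by (rule fa_homog_subst[OF assms f])
  then show "Z \<in> up_homog br d"
    by (auto simp: Z UP_subst_class up_homog_def fa_homog_def)
qed

end


section \<open>The endomorphism of U(P) induced by a Poisson homomorphism\<close>

definition poisson_hom ::
  "(('v, 'k::field) mpoly \<Rightarrow> ('v, 'k) mpoly \<Rightarrow> ('v, 'k) mpoly)
   \<Rightarrow> (('v, 'k) mpoly \<Rightarrow> ('v, 'k) mpoly) \<Rightarrow> bool" where
  "poisson_hom br \<phi> \<longleftrightarrow>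
     (\<forall>a b. \<phi> (a + b) = \<phi> a + \<phi> b) \<and> (\<forall>a b. \<phi> (a * b) = \<phi> a * \<phi> b) \<and> \<phi> 1 = 1 \<and>
     (\<forall>c a. \<phi> (mconst c * a) = mconst c * \<phi> a) \<and> (\<forall>a b. \<phi> (br a b) = br (\<phi> a) (\<phi> b))"

lemma
  assumes "poisson_hom br \<phi>"
  shows poisson_hom_add: "\<phi> (a + b) = \<phi> a + \<phi> b"
    and poisson_hom_mult: "\<phi> (a * b) = \<phi> a * \<phi> b"
    and poisson_hom_1: "\<phi> 1 = 1"
    and poisson_hom_mconst_mult: "\<phi> (mconst c * a) = mconst c * \<phi> a"
    and poisson_hom_br: "\<phi> (br a b) = br (\<phi> a) (\<phi> b)"
  using assms unfolding poisson_hom_def by blast+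

lemma poisson_hom_0: "poisson_hom br \<phi> \<Longrightarrow> \<phi> 0 = 0"
  using poisson_hom_add[of br \<phi> 0 0] by simp

lemma poisson_hom_mconst: "poisson_hom br \<phi> \<Longrightarrow> \<phi> (mconst c) = mconst c"
  using poisson_hom_mconst_mult[of br \<phi> c 1] by (simp add: poisson_hom_1)

lemma graded_poisson_aut_iff:
  "graded_poisson_aut br \<phi> \<longleftrightarrow> bij \<phi> \<and> poisson_hom br \<phi> \<and> (\<forall>d. \<phi> ` mhomog d \<subseteq> mhomog d)"
  by (auto simp: graded_poisson_aut_def poisson_hom_def)

lemma poisson_hom_inv:
  assumes "bij \<phi>" and hom: "poisson_hom br \<phi>"
  shows "poisson_hom br (inv_into UNIV \<phi>)"
proof -
  have \<phi>_inv: "\<phi> (inv_into UNIV \<phi> x) = x" for x using assms(1) by (simp add: bij_is_surj surj_f_inv_f)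
  have inv_\<phi>: "inv_into UNIV \<phi> (\<phi> x) = x" for x using assms(1) by (simp add: bij_is_inj)
  show ?thesis
    unfolding poisson_hom_def
    by (metis \<phi>_inv inv_\<phi> poisson_hom_add[OF hom] poisson_hom_mult[OF hom] poisson_hom_1[OF hom]
        poisson_hom_mconst_mult[OF hom] poisson_hom_br[OF hom])
qed

definition induced_gen ::
  "(('v::{finite,linorder}, 'k::field) mpoly \<Rightarrow> ('v, 'k) mpoly) \<Rightarrow> 'v + 'v \<Rightarrow> ('v, 'k) fa" where
  "induced_gen \<phi> g = (case g of Inl i \<Rightarrow> fa_lift (\<phi> (mvar i)) | Inr i \<Rightarrow> fa_beta (\<phi> (mvar i)))"

context
  fixes br :: "('v::{finite,linorder}, 'k::field) mpoly \<Rightarrow> ('v, 'k) mpoly \<Rightarrow> ('v, 'k) mpoly"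
    and \<phi> :: "('v, 'k) mpoly \<Rightarrow> ('v, 'k) mpoly"
  assumes PB: "poisson_bracket br" and hom: "poisson_hom br \<phi>"
begin

lemma fa_cong_subst_x_word:
  assumes "set w \<subseteq> range Inl"
  shows "fa_cong br (prod_list (map (induced_gen \<phi>) w))
    (fa_lift (\<phi> (Poly_Mapping.single (word_monom w) 1)))"
  using assms
proof (induction w)
  case Nil then show ?case by (simp add: poisson_hom_1[OF hom])
next
  case (Cons g w)
  then obtain v where g: "g = Inl v" by auto
  have "prod_list (map (induced_gen \<phi>) (g # w)) =
      fa_lift (\<phi> (mvar v)) * prod_list (map (induced_gen \<phi>) w)"
    by (simp add: induced_gen_def g)
  also have "fa_cong br \<dots> (fa_lift (\<phi> (mvar v)) * fa_lift (\<phi> (Poly_Mapping.single (word_monom w) 1)))"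
    using Cons by (intro fa_cong_mult fa_cong_refl) auto
  also have "fa_cong br \<dots> (fa_lift (\<phi> (mvar v) * \<phi> (Poly_Mapping.single (word_monom w) 1)))"
    by (rule fa_cong_lift_mult)
  also have "\<dots> = fa_lift (\<phi> (Poly_Mapping.single (word_monom (g # w)) 1))"
    by (simp add: poisson_hom_mult[OF hom, symmetric] mvar_def mult_single g)
  finally show ?case .
qed

lemma fa_cong_subst_lift: "fa_cong br (fa_subst (induced_gen \<phi>) (fa_lift f)) (fa_lift (\<phi> f))"
proof (induction f rule: poly_mapping_induct)
  case zero then show ?case by (simp add: poisson_hom_0[OF hom])
next
  case (single m c)
  have "fa_subst (induced_gen \<phi>) (fa_lift (Poly_Mapping.single m c)) =
      Poly_Mapping.single [] c * prod_list (map (induced_gen \<phi>) (xword m))"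
    by (simp add: fa_lift_single fa_subst_single)
  also have "fa_cong br \<dots>
      (Poly_Mapping.single [] c * fa_lift (\<phi> (Poly_Mapping.single (word_monom (xword m)) 1)))"
    by (intro fa_cong_mult fa_cong_refl fa_cong_subst_x_word set_xword_subset_Inl)
  also have "\<dots> = fa_lift (\<phi> (Poly_Mapping.single m c))"
    by (subst (2) single_eq_mconst_mult) (simp add: poisson_hom_mconst_mult[OF hom] fa_lift_mconst_mult)
  finally show ?case .
next
  case (add f g) then show ?case
    by (simp add: fa_subst_add fa_lift_add poisson_hom_add[OF hom] fa_cong_add)
qed

lemma fa_cong_beta_chain_rule:
  "fa_cong br (fa_beta (\<phi> f)) (\<Sum>k\<in>UNIV. fa_lift (\<phi> (mpderiv k f)) * fa_beta (\<phi> (mvar k)))"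
proof (induction f rule: mpoly_induct)
  case (const c) then show ?case by (simp add: poisson_hom_mconst[OF hom] poisson_hom_0[OF hom])
next
  case (var i)
  have "(\<Sum>k\<in>UNIV. fa_lift (\<phi> (mpderiv k (mvar i))) * fa_beta (\<phi> (mvar k))) =
      (\<Sum>k\<in>UNIV. if k = i then fa_beta (\<phi> (mvar k)) else 0)"
    by (rule sum.cong) (auto simp: mpderiv_mvar poisson_hom_1[OF hom] poisson_hom_0[OF hom])
  then show ?case by simp
next
  case (add f g) then show ?case
    by (simp add: poisson_hom_add[OF hom] fa_beta_add mpderiv_add fa_lift_add distrib_right
        sum.distrib fa_cong_add)
next
  case (mult f g)
  let ?B = "\<lambda>k. fa_beta (\<phi> (mvar k))"
  have "fa_beta (\<phi> (f * g)) = fa_beta (\<phi> f * \<phi> g)" by (simp add: poisson_hom_mult[OF hom])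
  also have "fa_cong br \<dots> (fa_lift (\<phi> f) * fa_beta (\<phi> g) + fa_lift (\<phi> g) * fa_beta (\<phi> f))"
    by (rule fa_cong_beta_mult)
  also have "fa_cong br \<dots> (fa_lift (\<phi> f) * (\<Sum>k\<in>UNIV. fa_lift (\<phi> (mpderiv k g)) * ?B k)
       + fa_lift (\<phi> g) * (\<Sum>k\<in>UNIV. fa_lift (\<phi> (mpderiv k f)) * ?B k))"
    by (intro fa_cong_add fa_cong_mult fa_cong_refl mult)
  also have "\<dots> = (\<Sum>k\<in>UNIV. (fa_lift (\<phi> f) * fa_lift (\<phi> (mpderiv k g)) +
      fa_lift (\<phi> g) * fa_lift (\<phi> (mpderiv k f))) * ?B k)"
    by (simp add: sum_distrib_left distrib_right sum.distrib mult.assoc)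
  also have "fa_cong br \<dots> (\<Sum>k\<in>UNIV. (fa_lift (\<phi> f * \<phi> (mpderiv k g)) +
      fa_lift (\<phi> g * \<phi> (mpderiv k f))) * ?B k)"
    by (intro fa_cong_sum fa_cong_mult fa_cong_add fa_cong_refl fa_cong_lift_mult)
  also have "\<dots> = (\<Sum>k\<in>UNIV. fa_lift (\<phi> (mpderiv k (f * g))) * ?B k)"
    by (simp add: mpderiv_mult poisson_hom_add[OF hom] poisson_hom_mult[OF hom] fa_lift_add)
  finally show ?case .
qed

lemma fa_cong_subst_beta: "fa_cong br (fa_subst (induced_gen \<phi>) (fa_beta f)) (fa_beta (\<phi> f))"
proof -
  have "fa_subst (induced_gen \<phi>) (fa_beta f) =
      (\<Sum>k\<in>UNIV. fa_subst (induced_gen \<phi>) (fa_lift (mpderiv k f)) * fa_beta (\<phi> (mvar k)))"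
    by (simp add: fa_beta_def fa_subst_sum fa_subst_mult induced_gen_def)
  also have "fa_cong br \<dots> (\<Sum>k\<in>UNIV. fa_lift (\<phi> (mpderiv k f)) * fa_beta (\<phi> (mvar k)))"
    by (intro fa_cong_sum fa_cong_mult fa_cong_refl fa_cong_subst_lift)
  also have "fa_cong br \<dots> (fa_beta (\<phi> f))"
    by (rule fa_cong_sym[OF fa_cong_beta_chain_rule])
  finally show ?thesis .
qed

lemma fa_subst_induced_UP_rels:
  assumes "r \<in> UP_rels br"
  shows "fa_subst (induced_gen \<phi>) r \<in> UP_ideal br"
proof -
  let ?S = "fa_subst (induced_gen \<phi>)"
  have "fa_cong br (?S (fa_comm (fa_gen (Inl i)) (fa_gen (Inl j)))) 0" for i j
    using fa_cong_lift_commute by (simp add: fa_comm_eq fa_subst_diff fa_subst_mult induced_gen_def)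
  moreover have "fa_cong br (?S (fa_comm (fa_gen (Inr i)) (fa_gen (Inr j))
      - (\<Sum>k\<in>UNIV. fa_mult (fa_lift (mpderiv k (br (mvar i) (mvar j)))) (fa_gen (Inr k))))) 0" for i j
  proof -
    have "?S (fa_comm (fa_gen (Inr i)) (fa_gen (Inr j))
        - (\<Sum>k\<in>UNIV. fa_mult (fa_lift (mpderiv k (br (mvar i) (mvar j)))) (fa_gen (Inr k)))) =
        fa_comm (fa_beta (\<phi> (mvar i))) (fa_beta (\<phi> (mvar j))) - ?S (fa_beta (br (mvar i) (mvar j)))"
      by (simp add: fa_comm_eq fa_subst_diff fa_subst_mult induced_gen_def fa_mult_eq_times fa_beta_def)
    also have "fa_cong br \<dots> (fa_beta (br (\<phi> (mvar i)) (\<phi> (mvar j))) - fa_beta (\<phi> (br (mvar i) (mvar j))))"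
      by (intro fa_cong_diff fa_cong_comm_beta_beta[OF PB] fa_cong_subst_beta)
    also have "\<dots> = 0" by (simp add: poisson_hom_br[OF hom])
    finally show ?thesis .
  qed
  moreover have
    "fa_cong br (?S (fa_comm (fa_gen (Inr i)) (fa_gen (Inl j)) - fa_lift (br (mvar i) (mvar j)))) 0"
    for i j
  proof -
    have "?S (fa_comm (fa_gen (Inr i)) (fa_gen (Inl j)) - fa_lift (br (mvar i) (mvar j))) =
        fa_comm (fa_beta (\<phi> (mvar i))) (fa_lift (\<phi> (mvar j))) - ?S (fa_lift (br (mvar i) (mvar j)))"
      by (simp add: fa_comm_eq fa_subst_diff fa_subst_mult induced_gen_def)
    also have "fa_cong br \<dots> (fa_lift (br (\<phi> (mvar i)) (\<phi> (mvar j))) - fa_lift (\<phi> (br (mvar i) (mvar j))))"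
      by (intro fa_cong_diff fa_cong_comm_beta_lift[OF PB] fa_cong_subst_lift)
    also have "\<dots> = 0" by (simp add: poisson_hom_br[OF hom])
    finally show ?thesis .
  qed
  ultimately show ?thesis
    using assms unfolding UP_rels_def fa_cong_def by auto
qed

lemma UP_subst_induced_class:
  "UP_subst br (induced_gen \<phi>) (up_class br a) = up_class br (fa_subst (induced_gen \<phi>) a)"
  by (rule UP_subst_class) (rule fa_subst_induced_UP_rels)

lemma UP_subst_induced_ring_hom: "UP_subst br (induced_gen \<phi>) \<in> ring_hom (UP br) (UP br)"
  by (rule UP_subst_ring_hom) (rule fa_subst_induced_UP_rels)

lemma UP_subst_induced_scalar:
  "X \<in> carrier (UP br) \<Longrightarrow> UP_subst br (induced_gen \<phi>) (up_scalar br c \<otimes>\<^bsub>UP br\<^esub> X) =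
     up_scalar br c \<otimes>\<^bsub>UP br\<^esub> UP_subst br (induced_gen \<phi>) X"
  by (rule UP_subst_scalar) (rule fa_subst_induced_UP_rels)

lemma UP_subst_induced_alpha: "UP_subst br (induced_gen \<phi>) (up_alpha br f) = up_alpha br (\<phi> f)"
  unfolding up_alpha_def UP_subst_induced_class up_class_eq_iff by (rule fa_cong_subst_lift)

lemma UP_subst_induced_beta: "UP_subst br (induced_gen \<phi>) (up_beta br f) = up_beta br (\<phi> f)"
  unfolding up_beta_eq_class UP_subst_induced_class up_class_eq_iff by (rule fa_cong_subst_beta)

lemma UP_subst_induced_y: "UP_subst br (induced_gen \<phi>) (up_y br i) = up_beta br (\<phi> (mvar i))"
  by (simp add: up_y_def UP_subst_induced_class induced_gen_def up_beta_eq_class)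

end


section \<open>Grading, invertibility and uniqueness\<close>

lemma mon_deg_add: "mon_deg (m + n) = mon_deg m + mon_deg n"
  by (simp add: mon_deg_def lookup_add sum.distrib)

lemma mon_deg_single_1: "mon_deg (Poly_Mapping.single (i::'v::finite) 1) = 1"
proof -
  have "mon_deg (Poly_Mapping.single i 1) = (\<Sum>v\<in>UNIV. if v = i then 1 else 0)"
    unfolding mon_deg_def by (rule sum.cong) (auto simp: lookup_single)
  then show ?thesis by simp
qed

lemma mvar_mhomog_1: "mvar i \<in> mhomog 1"
  using mon_deg_single_1[of i] by (simp add: mhomog_def mvar_def)

lemma mpderiv_mhomog:
  assumes "f \<in> mhomog (Suc d)"
  shows "mpderiv k f \<in> mhomog d"
  unfolding mhomog_def
proof (intro CollectI ballI)
  fix m assume "m \<in> Poly_Mapping.keys (mpderiv k f)"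
  then have "m + Poly_Mapping.single k 1 \<in> Poly_Mapping.keys f"
    by (auto simp: in_keys_iff lookup_mpderiv)
  then have "mon_deg (m + Poly_Mapping.single k 1) = Suc d"
    using assms by (simp add: mhomog_def)
  then have "mon_deg m + 1 = Suc d"
    by (metis mon_deg_add mon_deg_single_1)
  then show "mon_deg m = d"
    by simp
qed

lemma fa_homog_lift:
  assumes "f \<in> mhomog d"
  shows "fa_homog d (fa_lift f)"
  unfolding fa_lift_def
proof (rule fa_homog_sum)
  fix m assume "m \<in> Poly_Mapping.keys f"
  then have "length (xword m) = d" using assms by (simp add: mhomog_def length_xword)
  then show "fa_homog d (Poly_Mapping.single (xword m) (Poly_Mapping.lookup f m))"
    using fa_homog_single[of "xword m"] by simp
qed

lemma fa_homog_beta: "f \<in> mhomog 1 \<Longrightarrow> fa_homog 1 (fa_beta f)"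
  unfolding fa_beta_def
proof (rule fa_homog_sum)
  fix k assume "f \<in> mhomog 1"
  then have "fa_homog 0 (fa_lift (mpderiv k f))" by (intro fa_homog_lift mpderiv_mhomog) simp
  moreover have "fa_homog 1 (fa_gen (Inr k))"
    by (simp add: fa_gen_def fa_homog_def)
  ultimately show "fa_homog 1 (fa_lift (mpderiv k f) * fa_gen (Inr k))"
    using fa_homog_mult by fastforce
qed

lemma fa_homog_induced_gen:
  assumes "\<And>i. \<phi> (mvar i) \<in> mhomog 1"
  shows "fa_homog 1 (induced_gen \<phi> g)"
proof (cases g)
  case (Inl i)
  then show ?thesis using fa_homog_lift[OF assms[of i]] by (simp add: induced_gen_def)
next
  case (Inr i)
  then show ?thesis using fa_homog_beta[OF assms[of i]] by (simp add: induced_gen_def)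
qed

context
  fixes br :: "('v::{finite,linorder}, 'k::field) mpoly \<Rightarrow> ('v, 'k) mpoly \<Rightarrow> ('v, 'k) mpoly"
  assumes PB: "poisson_bracket br"
begin

lemma UP_subst_induced_inverse:
  assumes hom: "poisson_hom br \<phi>" and hom': "poisson_hom br \<chi>" and inverse: "\<And>f. \<phi> (\<chi> f) = f"
    and X: "X \<in> carrier (UP br)"
  shows "UP_subst br (induced_gen \<phi>) (UP_subst br (induced_gen \<chi>) X) = X"
proof -
  let ?S = "UP_subst br (induced_gen \<phi>)" and ?T = "UP_subst br (induced_gen \<chi>)"
  note S_hom = UP_subst_induced_ring_hom[OF PB hom] and T_hom = UP_subst_induced_ring_hom[OF PB hom']
  have "(?S \<circ> ?T) X = id X"
  proof (rule UP_hom_eqI[OF ring_hom_trans[OF T_hom S_hom] id_ring_hom _ _ _ X])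
    fix c Y assume Y: "Y \<in> carrier (UP br)"
    have "?T Y \<in> carrier (UP br)"
      using ring_hom_closed[OF T_hom Y] .
    with Y show "(?S \<circ> ?T) (up_scalar br c \<otimes>\<^bsub>UP br\<^esub> Y) = up_scalar br c \<otimes>\<^bsub>UP br\<^esub> (?S \<circ> ?T) Y"
      by (simp add: UP_subst_induced_scalar[OF PB hom] UP_subst_induced_scalar[OF PB hom'])
  next
    fix c Y
    show "id (up_scalar br c \<otimes>\<^bsub>UP br\<^esub> Y) = up_scalar br c \<otimes>\<^bsub>UP br\<^esub> id Y"
      by simp
  next
    fix g
    show "(?S \<circ> ?T) (up_class br (fa_gen g)) = id (up_class br (fa_gen g))"
    proof (cases g)
      case (Inl i)
      have "?S (?T (up_alpha br (mvar i))) = up_alpha br (mvar i)"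
        by (simp add: UP_subst_induced_alpha[OF PB hom] UP_subst_induced_alpha[OF PB hom'] inverse)
      then show ?thesis by (simp add: Inl up_alpha_mvar)
    next
      case (Inr i)
      have "?S (?T (up_beta br (mvar i))) = up_beta br (mvar i)"
        by (simp add: UP_subst_induced_beta[OF PB hom] UP_subst_induced_beta[OF PB hom'] inverse)
      then show ?thesis by (simp add: Inr up_beta_mvar)
    qed
  qed
  then show ?thesis by simp
qed

lemma up_graded_aut_UP_subst_induced:
  assumes bij: "bij \<phi>" and hom: "poisson_hom br \<phi>" and linear: "\<And>i. \<phi> (mvar i) \<in> mhomog 1"
  shows "up_graded_aut br (UP_subst br (induced_gen \<phi>))"
proof -
  let ?S = "UP_subst br (induced_gen \<phi>)" and ?T = "UP_subst br (induced_gen (inv_into UNIV \<phi>))"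
  have hom': "poisson_hom br (inv_into UNIV \<phi>)"
    by (rule poisson_hom_inv[OF bij hom])
  have "bij_betw ?S (carrier (UP br)) (carrier (UP br))"
  proof (rule bij_betw_byWitness[where f' = ?T])
    have "inv_into UNIV \<phi> (\<phi> f) = f" "\<phi> (inv_into UNIV \<phi> f) = f" for f
      using bij by (simp_all add: bij_is_inj bij_is_surj surj_f_inv_f)
    then show "\<forall>X\<in>carrier (UP br). ?T (?S X) = X" "\<forall>X\<in>carrier (UP br). ?S (?T X) = X"
      using UP_subst_induced_inverse[OF hom' hom] UP_subst_induced_inverse[OF hom hom'] by blast+
    show "?S ` carrier (UP br) \<subseteq> carrier (UP br)" "?T ` carrier (UP br) \<subseteq> carrier (UP br)"
      using ring_hom_closed[OF UP_subst_induced_ring_hom[OF PB hom]]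
        ring_hom_closed[OF UP_subst_induced_ring_hom[OF PB hom']] by blast+
  qed
  moreover have "?S ` up_homog br d \<subseteq> up_homog br d" for d
    by (rule UP_subst_homog[OF fa_subst_induced_UP_rels[OF PB hom]
          fa_homog_induced_gen[of \<phi>, OF linear]])
  ultimately show ?thesis
    unfolding up_graded_aut_def ring_iso_def
    using UP_subst_induced_ring_hom[OF PB hom] UP_subst_induced_scalar[OF PB hom] by blast
qed

lemma up_graded_aut_eq_UP_subst_induced:
  assumes hom: "poisson_hom br \<phi>" and aut: "up_graded_aut br \<psi>"
    and alpha: "\<And>f. up_alpha br (\<phi> f) = \<psi> (up_alpha br f)"
    and beta: "\<And>f. up_beta br (\<phi> f) = \<psi> (up_beta br f)"
    and X: "X \<in> carrier (UP br)"
  shows "\<psi> X = UP_subst br (induced_gen \<phi>) X"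
proof (rule UP_hom_eqI[OF _ UP_subst_induced_ring_hom[OF PB hom] _
      UP_subst_induced_scalar[OF PB hom] _ X])
  show "\<psi> \<in> ring_hom (UP br) (UP br)"
    and "\<And>c Y. Y \<in> carrier (UP br) \<Longrightarrow>
      \<psi> (up_scalar br c \<otimes>\<^bsub>UP br\<^esub> Y) = up_scalar br c \<otimes>\<^bsub>UP br\<^esub> \<psi> Y"
    using aut unfolding up_graded_aut_def ring_iso_def by blast+
next
  fix g
  show "\<psi> (up_class br (fa_gen g)) = UP_subst br (induced_gen \<phi>) (up_class br (fa_gen g))"
  proof (cases g)
    case (Inl i)
    then show ?thesis
      using alpha[of "mvar i"] UP_subst_induced_alpha[OF PB hom, of "mvar i"]
      by (simp add: up_alpha_mvar)
  next
    case (Inr i)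
    then show ?thesis
      using beta[of "mvar i"] UP_subst_induced_beta[OF PB hom, of "mvar i"]
      by (simp add: up_beta_mvar)
  qed
qed

end

theorem lemma2p3:
  fixes br :: "('v::{finite,linorder}, 'k::field_char_0) mpoly \<Rightarrow> ('v, 'k) mpoly \<Rightarrow> ('v, 'k) mpoly"
    and \<phi> :: "('v, 'k) mpoly \<Rightarrow> ('v, 'k) mpoly"
  assumes "alg_closed_field TYPE('k)"
    and "quadratic_poisson br"
    and "graded_poisson_aut br \<phi>"
  shows "\<exists>\<psi>. up_graded_aut br \<psi>
            \<and> (\<forall>f. up_alpha br (\<phi> f) = \<psi> (up_alpha br f))
            \<and> (\<forall>f. up_beta br (\<phi> f) = \<psi> (up_beta br f))
            \<and> (\<forall>i. \<psi> (up_alpha br (mvar i)) = up_alpha br (\<phi> (mvar i)))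
            \<and> (\<forall>i. \<psi> (up_y br i) =
                 (\<Oplus>\<^bsub>UP br\<^esub> j\<in>UNIV. up_alpha br (mpderiv j (\<phi> (mvar i))) \<otimes>\<^bsub>UP br\<^esub> up_y br j))
            \<and> (\<forall>\<psi>'. up_graded_aut br \<psi>'
                  \<and> (\<forall>f. up_alpha br (\<phi> f) = \<psi>' (up_alpha br f))
                  \<and> (\<forall>f. up_beta br (\<phi> f) = \<psi>' (up_beta br f))
                  \<longrightarrow> (\<forall>X\<in>carrier (UP br). \<psi>' X = \<psi> X))"
proof -
  have PB: "poisson_bracket br"
    using assms(2) by (simp add: quadratic_poisson_def)
  have bij: "bij \<phi>" and hom: "poisson_hom br \<phi>" and graded: "\<And>d. \<phi> ` mhomog d \<subseteq> mhomog d"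
    using assms(3) by (simp_all add: graded_poisson_aut_iff)
  have linear: "\<phi> (mvar i) \<in> mhomog 1" for i
    using graded[of 1] mvar_mhomog_1[of i] by blast
  show ?thesis
  proof (intro exI[of _ "UP_subst br (induced_gen \<phi>)"] conjI allI impI ballI)
    show "up_graded_aut br (UP_subst br (induced_gen \<phi>))"
      by (rule up_graded_aut_UP_subst_induced[OF PB bij hom linear])
    show "up_alpha br (\<phi> f) = UP_subst br (induced_gen \<phi>) (up_alpha br f)"
      and "up_beta br (\<phi> f) = UP_subst br (induced_gen \<phi>) (up_beta br f)"
      and "UP_subst br (induced_gen \<phi>) (up_alpha br (mvar i)) = up_alpha br (\<phi> (mvar i))" for f i
      by (simp_all add: UP_subst_induced_alpha[OF PB hom] UP_subst_induced_beta[OF PB hom])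
    show "UP_subst br (induced_gen \<phi>) (up_y br i) =
        (\<Oplus>\<^bsub>UP br\<^esub> j\<in>UNIV. up_alpha br (mpderiv j (\<phi> (mvar i))) \<otimes>\<^bsub>UP br\<^esub> up_y br j)" for i
      by (simp add: UP_subst_induced_y[OF PB hom] up_beta_def)
    show "\<psi>' X = UP_subst br (induced_gen \<phi>) X"
      if "up_graded_aut br \<psi>' \<and> (\<forall>f. up_alpha br (\<phi> f) = \<psi>' (up_alpha br f))
          \<and> (\<forall>f. up_beta br (\<phi> f) = \<psi>' (up_beta br f))" and "X \<in> carrier (UP br)" for \<psi>' X
      using that by (intro up_graded_aut_eq_UP_subst_induced[OF PB hom]) auto
  qed
qed

end
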